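(* Let $(H,\partial)$ be a right Cartan–Eilenberg system, with right couple $(A'',E^1,\alpha,\beta,\gamma)$. Then there is a natural isomorphism $$W''\xrightarrow{\ \cong\ }\ker(\kappa)$$ of internal degree $-1$, where $W''=\operatorname{colim}_s\operatorname{Rlim}_r K_\infty\operatorname{im}^rA''_s$ is Boardman's whole-plane obstruction group of the right couple and $\kappa\colon \operatorname{colim}_j\lim_iH(i,j)\to\lim_i\operatorname{colim}_jH(i,j)$ is the interchange morphism of the underlying Cartan–Eilenberg system. (No convergence hypothesis is assumed.)
   Context: Let $R$ be a ring and $\mathcal{A}$ the abelian category of $\mathbb{Z}$-graded $R$-modules (grading = internal degree). For a linearly ordered set $\mathcal{I}$, an $\mathcal{I}$-system $(H,\partial)$ consists of objects $H(i,j)\in\mathcal{A}$ for $i\le j$ in $\mathcal{I}$, functorial morphisms $\eta\colon H(i,j)\to H(i',j')$ of internal degree $0$ for $i\le i'$, $j\le j'$, and natural morphisms $\partial\colon H(j,k)\to H(i,j)$ of internal degree $-1$ for $i\le j\le k$ (commuting with the $\eta$'s), such that $H(i,j)\xrightarrow{\eta}H(i,k)\xrightarrow{\eta}H(j,k)\xrightarrow{\partial}H(i,j)$ is exact at each vertex for all $i\le j\le k$. A Cartan–Eilenberg system is a $\mathbb{Z}$-system; a right Cartan–Eilenberg system is a $(\mathbb{Z}\cup\{+\infty\})$-system, $+\infty$ being the greatest element; its underlying Cartan–Eilenberg system is its restriction to $\mathbb{Z}$. The right couple of a right Cartan–Eilenberg system: $A''_s=H(s,\infty)$, $E^1_s=H(s-1,s)$,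 $\alpha_s=\eta\colon A''_{s-1}\to A''_s$, $\beta_s=\partial\colon H(s,\infty)\to H(s-1,s)$, $\gamma_s=\eta\colon H(s-1,s)\to H(s-1,\infty)$. For an exact couple (or any sequence) $\cdots\to A_{s-1}\xrightarrow{\alpha}A_s\to\cdots$: $A_\infty=\operatorname{colim}_sA_s$ with structure maps $\iota_s\colon A_s\to A_\infty$; $\operatorname{im}^rA_s=\operatorname{im}(\alpha^r\colon A_{s-r}\to A_s)$; $K_\infty\operatorname{im}^rA_s=\ker(\iota_s)\cap\operatorname{im}^rA_s$, a decreasing sequence in $r$; $W=\operatorname{colim}_s\operatorname{Rlim}_rK_\infty\operatorname{im}^rA_s$ (colimit along maps induced by $\alpha$), where $\operatorname{Rlim}=\lim^1$. Limits/derived limits over $i$ are along $\eta\colon H(i-1,j)\to H(i,j)$ as $i\to-\infty$, colimits over $j$ along $\eta\colon H(i,j)\to H(i,j+1)$. The interchange morphism $\kappa\colon\operatorname{colim}_j\lim_iH(i,j)\to\lim_i\operatorname{colim}_jH(i,j)$ is the canonical morphism whose restriction to $\lim_iH(i,j)$ followed by projection to $\operatorname{colim}_jH(i,j)$ is $\lim_iH(i,j)\to H(i,j)\to\operatorname{colim}_jH(i,j)$. *)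

theory Defs
  imports Main
begin

datatype zinf = Fin int | PInf

fun zle :: "zinf \<Rightarrow> zinf \<Rightarrow> bool" where
  "zle (Fin a) (Fin b) = (a \<le> b)"
| "zle _ PInf = True"
| "zle PInf (Fin _) = False"

section \<open>Left modules over a ring (carrier-based, so that constructions can be performed)\<close>

record ('r, 'a) rmod =
  carr  :: "'a set"
  madd  :: "'a \<Rightarrow> 'a \<Rightarrow> 'a"
  mzero :: "'a"
  mneg  :: "'a \<Rightarrow> 'a"
  msmul :: "'r \<Rightarrow> 'a \<Rightarrow> 'a"

definition is_rmod :: "('r::ring_1, 'a) rmod \<Rightarrow> bool" where
  "is_rmod M \<longleftrightarrow>
     mzero M \<in> carr M
   \<and> (\<forall>x\<in>carr M. \<forall>y\<in>carr M. madd M x y \<in> carr M)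
   \<and> (\<forall>x\<in>carr M. mneg M x \<in> carr M)
   \<and> (\<forall>r. \<forall>x\<in>carr M. msmul M r x \<in> carr M)
   \<and> (\<forall>x\<in>carr M. \<forall>y\<in>carr M. \<forall>z\<in>carr M. madd M (madd M x y) z = madd M x (madd M y z))
   \<and> (\<forall>x\<in>carr M. \<forall>y\<in>carr M. madd M x y = madd M y x)
   \<and> (\<forall>x\<in>carr M. madd M (mzero M) x = x)
   \<and> (\<forall>x\<in>carr M. madd M (mneg M x) x = mzero M)
   \<and> (\<forall>x\<in>carr M. msmul M 1 x = x)
   \<and> (\<forall>r s. \<forall>x\<in>carr M. msmul M (r * s) x = msmul M r (msmul M s x))
   \<and> (\<forall>r s. \<forall>x\<in>carr M. msmul M (r + s) x = madd M (msmul M r x) (msmul M s x))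
   \<and> (\<forall>r. \<forall>x\<in>carr M. \<forall>y\<in>carr M. msmul M r (madd M x y) = madd M (msmul M r x) (msmul M r y))"

definition is_hom :: "('r, 'a) rmod \<Rightarrow> ('r, 'b) rmod \<Rightarrow> ('a \<Rightarrow> 'b) \<Rightarrow> bool" where
  "is_hom M N f \<longleftrightarrow>
     (\<forall>x\<in>carr M. f x \<in> carr N)
   \<and> (\<forall>x\<in>carr M. \<forall>y\<in>carr M. f (madd M x y) = madd N (f x) (f y))
   \<and> (\<forall>r. \<forall>x\<in>carr M. f (msmul M r x) = msmul N r (f x))"

definition is_iso :: "('r, 'a) rmod \<Rightarrow> ('r, 'b) rmod \<Rightarrow> ('a \<Rightarrow> 'b) \<Rightarrow> bool" where
  "is_iso M N f \<longleftrightarrow> is_hom M N f \<and> bij_betw f (carr M) (carr N)"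

definition kerm :: "('r, 'a) rmod \<Rightarrow> ('r, 'b) rmod \<Rightarrow> ('a \<Rightarrow> 'b) \<Rightarrow> ('r, 'a) rmod" where
  "kerm M N f = M\<lparr>carr := {x \<in> carr M. f x = mzero N}\<rparr>"

definition rep :: "'b set \<Rightarrow> 'b" where
  "rep c = (SOME p. p \<in> c)"

section \<open>Sequential colimits (direct systems indexed by an up-set J of integers)\<close>

text \<open>Convention: t k : M (k-1) -> M k.  iter t j n : M j -> M (j+n).\<close>
fun iter :: "(int \<Rightarrow> 'a \<Rightarrow> 'a) \<Rightarrow> int \<Rightarrow> nat \<Rightarrow> 'a \<Rightarrow> 'a" where
  "iter t j 0 x = x"
| "iter t j (Suc n) x = t (j + int n + 1) (iter t j n x)"

definition colim_rel :: "(int \<Rightarrow> 'a \<Rightarrow> 'a) \<Rightarrow> int \<times> 'a \<Rightarrow> int \<times> 'a \<Rightarrow> bool" where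
  "colim_rel t p q \<longleftrightarrow> (\<exists>m. fst p \<le> m \<and> fst q \<le> m \<and>
      iter t (fst p) (nat (m - fst p)) (snd p) = iter t (fst q) (nat (m - fst q)) (snd q))"

definition colim_cls :: "(int \<Rightarrow> ('r, 'a) rmod) \<Rightarrow> (int \<Rightarrow> 'a \<Rightarrow> 'a) \<Rightarrow> int set \<Rightarrow> int \<times> 'a \<Rightarrow> (int \<times> 'a) set" where
  "colim_cls M t J p = {q. fst q \<in> J \<and> snd q \<in> carr (M (fst q)) \<and> colim_rel t p q}"

definition colim :: "(int \<Rightarrow> ('r, 'a) rmod) \<Rightarrow> (int \<Rightarrow> 'a \<Rightarrow> 'a) \<Rightarrow> int set \<Rightarrow> ('r, (int \<times> 'a) set) rmod" where
  "colim M t J =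
    \<lparr> carr = {colim_cls M t J (j, x) | j x. j \<in> J \<and> x \<in> carr (M j)},
      madd = (\<lambda>c d. let (j, x) = rep c; (k, y) = rep d; m = max j k in
                 colim_cls M t J (m, madd (M m) (iter t j (nat (m - j)) x) (iter t k (nat (m - k)) y))),
      mzero = (let j = (SOME j. j \<in> J) in colim_cls M t J (j, mzero (M j))),
      mneg = (\<lambda>c. let (j, x) = rep c in colim_cls M t J (j, mneg (M j) x)),
      msmul = (\<lambda>r c. let (j, x) = rep c in colim_cls M t J (j, msmul (M j) r x)) \<rparr>"

section \<open>Inverse limits over a down-set I of integers (limit as i -> -infinity)\<close>

text \<open>Convention: t i : M (i-1) -> M i.\<close>
definition ilim :: "(int \<Rightarrow> ('r, 'a) rmod) \<Rightarrow> (int \<Rightarrow> 'a \<Rightarrow> 'a) \<Rightarrow> int set \<Rightarrow> ('r, int \<Rightarrow> 'a) rmod" where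
  "ilim M t I =
    \<lparr> carr = {x. (\<forall>i\<in>I. x i \<in> carr (M i)) \<and> (\<forall>i. i \<in> I \<longrightarrow> i - 1 \<in> I \<longrightarrow> t i (x (i - 1)) = x i)
                 \<and> (\<forall>i. i \<notin> I \<longrightarrow> x i = undefined)},
      madd = (\<lambda>x y i. if i \<in> I then madd (M i) (x i) (y i) else undefined),
      mzero = (\<lambda>i. if i \<in> I then mzero (M i) else undefined),
      mneg = (\<lambda>x i. if i \<in> I then mneg (M i) (x i) else undefined),
      msmul = (\<lambda>r x i. if i \<in> I then msmul (M i) r (x i) else undefined) \<rparr>"

section \<open>The first derived limit Rlim = lim^1 of a tower  ... -> M (n+1) -> M n -> ... -> M 0\<close>

definition lim1_delta :: "(nat \<Rightarrow> ('r, 'a) rmod) \<Rightarrow> (nat \<Rightarrow> 'a \<Rightarrow> 'a) \<Rightarrow> (nat \<Rightarrow> 'a) \<Rightarrow> nat \<Rightarrow> 'a" where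
  "lim1_delta M t w n = madd (M n) (w n) (mneg (M n) (t n (w (Suc n))))"

definition lim1_cls :: "(nat \<Rightarrow> ('r, 'a) rmod) \<Rightarrow> (nat \<Rightarrow> 'a \<Rightarrow> 'a) \<Rightarrow> (nat \<Rightarrow> 'a) \<Rightarrow> (nat \<Rightarrow> 'a) set" where
  "lim1_cls M t y = {z. (\<forall>n. z n \<in> carr (M n)) \<and>
       (\<exists>w. (\<forall>n. w n \<in> carr (M n)) \<and> (\<forall>n. z n = madd (M n) (y n) (lim1_delta M t w n)))}"

definition lim1 :: "(nat \<Rightarrow> ('r, 'a) rmod) \<Rightarrow> (nat \<Rightarrow> 'a \<Rightarrow> 'a) \<Rightarrow> ('r, (nat \<Rightarrow> 'a) set) rmod" where
  "lim1 M t =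
    \<lparr> carr = {lim1_cls M t y | y. \<forall>n. y n \<in> carr (M n)},
      madd = (\<lambda>c d. lim1_cls M t (\<lambda>n. madd (M n) (rep c n) (rep d n))),
      mzero = lim1_cls M t (\<lambda>n. mzero (M n)),
      mneg = (\<lambda>c. lim1_cls M t (\<lambda>n. mneg (M n) (rep c n))),
      msmul = (\<lambda>r c. lim1_cls M t (\<lambda>n. msmul (M n) r (rep c n))) \<rparr>"

section \<open>Boardman's whole-plane obstruction group W of a sequence ... -> A (s-1) -> A s -> ...\<close>

text \<open>al s : A (s-1) -> A s.\<close>

definition iota :: "(int \<Rightarrow> ('r, 'a) rmod) \<Rightarrow> (int \<Rightarrow> 'a \<Rightarrow> 'a) \<Rightarrow> int \<Rightarrow> 'a \<Rightarrow> (int \<times> 'a) set" where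
  "iota A al s x = colim_cls A al UNIV (s, x)"

definition imr :: "(int \<Rightarrow> ('r, 'a) rmod) \<Rightarrow> (int \<Rightarrow> 'a \<Rightarrow> 'a) \<Rightarrow> nat \<Rightarrow> int \<Rightarrow> 'a set" where
  "imr A al r s = iter al (s - int r) r ` carr (A (s - int r))"

definition Kinf_imr :: "(int \<Rightarrow> ('r, 'a) rmod) \<Rightarrow> (int \<Rightarrow> 'a \<Rightarrow> 'a) \<Rightarrow> nat \<Rightarrow> int \<Rightarrow> 'a set" where
  "Kinf_imr A al r s = {x \<in> carr (A s). iota A al s x = mzero (colim A al UNIV)} \<inter> imr A al r s"

definition Ktower :: "(int \<Rightarrow> ('r, 'a) rmod) \<Rightarrow> (int \<Rightarrow> 'a \<Rightarrow> 'a) \<Rightarrow> int \<Rightarrow> nat \<Rightarrow> ('r, 'a) rmod" where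
  "Ktower A al s r = (A s)\<lparr>carr := Kinf_imr A al r s\<rparr>"

definition RlimK :: "(int \<Rightarrow> ('r, 'a) rmod) \<Rightarrow> (int \<Rightarrow> 'a \<Rightarrow> 'a) \<Rightarrow> int \<Rightarrow> ('r, (nat \<Rightarrow> 'a) set) rmod" where
  "RlimK A al s = lim1 (Ktower A al s) (\<lambda>r x. x)"

definition RlimK_tr :: "(int \<Rightarrow> ('r, 'a) rmod) \<Rightarrow> (int \<Rightarrow> 'a \<Rightarrow> 'a) \<Rightarrow> int \<Rightarrow> (nat \<Rightarrow> 'a) set \<Rightarrow> (nat \<Rightarrow> 'a) set" where
  "RlimK_tr A al s c = lim1_cls (Ktower A al s) (\<lambda>r x. x) (\<lambda>r. al s (rep c r))"

definition Wgrp :: "(int \<Rightarrow> ('r, 'a) rmod) \<Rightarrow> (int \<Rightarrow> 'a \<Rightarrow> 'a) \<Rightarrow> ('r, (int \<times> (nat \<Rightarrow> 'a) set) set) rmod" where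
  "Wgrp A al = colim (RlimK A al) (RlimK_tr A al) UNIV"

definition Wmap :: "(int \<Rightarrow> ('r, 'a) rmod) \<Rightarrow> (int \<Rightarrow> 'a \<Rightarrow> 'a) \<Rightarrow> (int \<Rightarrow> 'a \<Rightarrow> 'a)
    \<Rightarrow> (int \<times> (nat \<Rightarrow> 'a) set) set \<Rightarrow> (int \<times> (nat \<Rightarrow> 'a) set) set" where
  "Wmap A' al' g c = (case rep c of (s, d) \<Rightarrow>
      colim_cls (RlimK A' al') (RlimK_tr A' al') UNIV
        (s, lim1_cls (Ktower A' al' s) (\<lambda>r x. x) (\<lambda>r. g s (rep d r))))"

section \<open>(Right) Cartan-Eilenberg systems of graded modules, stored degreewise\<close>

text \<open>H i j n is the degree-n part of H(i,j);
  eta i j i' j' n : H(i,j)_n -> H(i',j')_n;  del i j k n : H(j,k)_n -> H(i,j)_(n-1).\<close>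

definition right_CE ::
  "(zinf \<Rightarrow> zinf \<Rightarrow> int \<Rightarrow> ('r::ring_1, 'a) rmod)
   \<Rightarrow> (zinf \<Rightarrow> zinf \<Rightarrow> zinf \<Rightarrow> zinf \<Rightarrow> int \<Rightarrow> 'a \<Rightarrow> 'a)
   \<Rightarrow> (zinf \<Rightarrow> zinf \<Rightarrow> zinf \<Rightarrow> int \<Rightarrow> 'a \<Rightarrow> 'a) \<Rightarrow> bool" where
  "right_CE H eta del \<longleftrightarrow>
     (\<forall>i j n. zle i j \<longrightarrow> is_rmod (H i j n))
   \<and> (\<forall>i j i' j' n. zle i j \<and> zle i' j' \<and> zle i i' \<and> zle j j' \<longrightarrow>
          is_hom (H i j n) (H i' j' n) (eta i j i' j' n))
   \<and> (\<forall>i j n. \<forall>x\<in>carr (H i j n). zle i j \<longrightarrow> eta i j i j n x = x)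
   \<and> (\<forall>i j i' j' i'' j'' n. \<forall>x\<in>carr (H i j n).
          zle i j \<and> zle i' j' \<and> zle i'' j'' \<and> zle i i' \<and> zle j j' \<and> zle i' i'' \<and> zle j' j'' \<longrightarrow>
          eta i' j' i'' j'' n (eta i j i' j' n x) = eta i j i'' j'' n x)
   \<and> (\<forall>i j k n. zle i j \<and> zle j k \<longrightarrow> is_hom (H j k n) (H i j (n - 1)) (del i j k n))
   \<and> (\<forall>i j k i' j' k' n. \<forall>x\<in>carr (H j k n).
          zle i j \<and> zle j k \<and> zle i' j' \<and> zle j' k' \<and> zle i i' \<and> zle j j' \<and> zle k k' \<longrightarrow>
          eta i j i' j' (n - 1) (del i j k n x) = del i' j' k' n (eta j k j' k' n x))
   \<and> (\<forall>i j k n. zle i j \<and> zle j k \<longrightarrow>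
          eta i j i k n ` carr (H i j n) = {y \<in> carr (H i k n). eta i k j k n y = mzero (H j k n)}
        \<and> eta i k j k n ` carr (H i k n) = {y \<in> carr (H j k n). del i j k n y = mzero (H i j (n - 1))}
        \<and> del i j k n ` carr (H j k n) = {y \<in> carr (H i j (n - 1)). eta i j i k (n - 1) y = mzero (H i k (n - 1))})"

definition right_CE_mor ::
  "(zinf \<Rightarrow> zinf \<Rightarrow> int \<Rightarrow> ('r::ring_1, 'a) rmod)
   \<Rightarrow> (zinf \<Rightarrow> zinf \<Rightarrow> zinf \<Rightarrow> zinf \<Rightarrow> int \<Rightarrow> 'a \<Rightarrow> 'a)
   \<Rightarrow> (zinf \<Rightarrow> zinf \<Rightarrow> zinf \<Rightarrow> int \<Rightarrow> 'a \<Rightarrow> 'a)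
   \<Rightarrow> (zinf \<Rightarrow> zinf \<Rightarrow> int \<Rightarrow> ('r, 'a) rmod)
   \<Rightarrow> (zinf \<Rightarrow> zinf \<Rightarrow> zinf \<Rightarrow> zinf \<Rightarrow> int \<Rightarrow> 'a \<Rightarrow> 'a)
   \<Rightarrow> (zinf \<Rightarrow> zinf \<Rightarrow> zinf \<Rightarrow> int \<Rightarrow> 'a \<Rightarrow> 'a)
   \<Rightarrow> (zinf \<Rightarrow> zinf \<Rightarrow> int \<Rightarrow> 'a \<Rightarrow> 'a) \<Rightarrow> bool" where
  "right_CE_mor H eta del H' eta' del' f \<longleftrightarrow>
     (\<forall>i j n. zle i j \<longrightarrow> is_hom (H i j n) (H' i j n) (f i j n))
   \<and> (\<forall>i j i' j' n. \<forall>x\<in>carr (H i j n). zle i j \<and> zle i' j' \<and> zle i i' \<and> zle j j' \<longrightarrow>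
          f i' j' n (eta i j i' j' n x) = eta' i j i' j' n (f i j n x))
   \<and> (\<forall>i j k n. \<forall>x\<in>carr (H j k n). zle i j \<and> zle j k \<longrightarrow>
          f i j (n - 1) (del i j k n x) = del' i j k n (f j k n x))"

definition Acpl :: "(zinf \<Rightarrow> zinf \<Rightarrow> int \<Rightarrow> ('r, 'a) rmod) \<Rightarrow> int \<Rightarrow> int \<Rightarrow> ('r, 'a) rmod" where
  "Acpl H n s = H (Fin s) PInf n"

definition alcpl :: "(zinf \<Rightarrow> zinf \<Rightarrow> zinf \<Rightarrow> zinf \<Rightarrow> int \<Rightarrow> 'a \<Rightarrow> 'a) \<Rightarrow> int \<Rightarrow> int \<Rightarrow> 'a \<Rightarrow> 'a" where
  "alcpl eta n s = eta (Fin (s - 1)) PInf (Fin s) PInf n"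

definition Wpp :: "(zinf \<Rightarrow> zinf \<Rightarrow> int \<Rightarrow> ('r, 'a) rmod) \<Rightarrow> (zinf \<Rightarrow> zinf \<Rightarrow> zinf \<Rightarrow> zinf \<Rightarrow> int \<Rightarrow> 'a \<Rightarrow> 'a)
   \<Rightarrow> int \<Rightarrow> ('r, (int \<times> (nat \<Rightarrow> 'a) set) set) rmod" where
  "Wpp H eta n = Wgrp (Acpl H n) (alcpl eta n)"

definition LimH :: "(zinf \<Rightarrow> zinf \<Rightarrow> int \<Rightarrow> ('r, 'a) rmod) \<Rightarrow> (zinf \<Rightarrow> zinf \<Rightarrow> zinf \<Rightarrow> zinf \<Rightarrow> int \<Rightarrow> 'a \<Rightarrow> 'a)
   \<Rightarrow> int \<Rightarrow> int \<Rightarrow> ('r, int \<Rightarrow> 'a) rmod" where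
  "LimH H eta m j = ilim (\<lambda>i. H (Fin i) (Fin j) m) (\<lambda>i. eta (Fin (i - 1)) (Fin j) (Fin i) (Fin j) m) {..j}"

definition LimH_tr :: "(zinf \<Rightarrow> zinf \<Rightarrow> zinf \<Rightarrow> zinf \<Rightarrow> int \<Rightarrow> 'a \<Rightarrow> 'a) \<Rightarrow> int \<Rightarrow> int \<Rightarrow> (int \<Rightarrow> 'a) \<Rightarrow> int \<Rightarrow> 'a" where
  "LimH_tr eta m j x = (\<lambda>i. if i \<le> j then eta (Fin (min i (j - 1))) (Fin (j - 1)) (Fin i) (Fin j) m (x (min i (j - 1)))
                           else undefined)"

definition ColimLim :: "(zinf \<Rightarrow> zinf \<Rightarrow> int \<Rightarrow> ('r, 'a) rmod) \<Rightarrow> (zinf \<Rightarrow> zinf \<Rightarrow> zinf \<Rightarrow> zinf \<Rightarrow> int \<Rightarrow> 'a \<Rightarrow> 'a)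
   \<Rightarrow> int \<Rightarrow> ('r, (int \<times> (int \<Rightarrow> 'a)) set) rmod" where
  "ColimLim H eta m = colim (LimH H eta m) (LimH_tr eta m) UNIV"

definition ColimH :: "(zinf \<Rightarrow> zinf \<Rightarrow> int \<Rightarrow> ('r, 'a) rmod) \<Rightarrow> (zinf \<Rightarrow> zinf \<Rightarrow> zinf \<Rightarrow> zinf \<Rightarrow> int \<Rightarrow> 'a \<Rightarrow> 'a)
   \<Rightarrow> int \<Rightarrow> int \<Rightarrow> ('r, (int \<times> 'a) set) rmod" where
  "ColimH H eta m i = colim (\<lambda>j. H (Fin i) (Fin j) m) (\<lambda>j. eta (Fin i) (Fin (j - 1)) (Fin i) (Fin j) m) {i..}"

definition ColimH_cls :: "(zinf \<Rightarrow> zinf \<Rightarrow> int \<Rightarrow> ('r, 'a) rmod) \<Rightarrow> (zinf \<Rightarrow> zinf \<Rightarrow> zinf \<Rightarrow> zinf \<Rightarrow> int \<Rightarrow> 'a \<Rightarrow> 'a)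
   \<Rightarrow> int \<Rightarrow> int \<Rightarrow> int \<times> 'a \<Rightarrow> (int \<times> 'a) set" where
  "ColimH_cls H eta m i p = colim_cls (\<lambda>j. H (Fin i) (Fin j) m) (\<lambda>j. eta (Fin i) (Fin (j - 1)) (Fin i) (Fin j) m) {i..} p"

definition ColimH_tr :: "(zinf \<Rightarrow> zinf \<Rightarrow> int \<Rightarrow> ('r, 'a) rmod) \<Rightarrow> (zinf \<Rightarrow> zinf \<Rightarrow> zinf \<Rightarrow> zinf \<Rightarrow> int \<Rightarrow> 'a \<Rightarrow> 'a)
   \<Rightarrow> int \<Rightarrow> int \<Rightarrow> (int \<times> 'a) set \<Rightarrow> (int \<times> 'a) set" where
  "ColimH_tr H eta m i c = (case rep c of (j, x) \<Rightarrow>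
      ColimH_cls H eta m i (max i j, eta (Fin (i - 1)) (Fin j) (Fin i) (Fin (max i j)) m x))"

definition LimColim :: "(zinf \<Rightarrow> zinf \<Rightarrow> int \<Rightarrow> ('r, 'a) rmod) \<Rightarrow> (zinf \<Rightarrow> zinf \<Rightarrow> zinf \<Rightarrow> zinf \<Rightarrow> int \<Rightarrow> 'a \<Rightarrow> 'a)
   \<Rightarrow> int \<Rightarrow> ('r, int \<Rightarrow> (int \<times> 'a) set) rmod" where
  "LimColim H eta m = ilim (ColimH H eta m) (ColimH_tr H eta m) UNIV"

text \<open>kappa: its component at i <= j on lim_i H(i,j) is  lim_i H(i,j) -> H(i,j) -> colim_j H(i,j);
  the components at i > j are forced by compatibility.\<close>
definition kappa :: "(zinf \<Rightarrow> zinf \<Rightarrow> int \<Rightarrow> ('r, 'a) rmod) \<Rightarrow> (zinf \<Rightarrow> zinf \<Rightarrow> zinf \<Rightarrow> zinf \<Rightarrow> int \<Rightarrow> 'a \<Rightarrow> 'a)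
   \<Rightarrow> int \<Rightarrow> (int \<times> (int \<Rightarrow> 'a)) set \<Rightarrow> int \<Rightarrow> (int \<times> 'a) set" where
  "kappa H eta m c = (case rep c of (j, x) \<Rightarrow>
      (\<lambda>i. ColimH_cls H eta m i (max i j, eta (Fin (min i j)) (Fin j) (Fin i) (Fin (max i j)) m (x (min i j)))))"

definition ker_kappa :: "(zinf \<Rightarrow> zinf \<Rightarrow> int \<Rightarrow> ('r, 'a) rmod) \<Rightarrow> (zinf \<Rightarrow> zinf \<Rightarrow> zinf \<Rightarrow> zinf \<Rightarrow> int \<Rightarrow> 'a \<Rightarrow> 'a)
   \<Rightarrow> int \<Rightarrow> ('r, (int \<times> (int \<Rightarrow> 'a)) set) rmod" where
  "ker_kappa H eta m = kerm (ColimLim H eta m) (LimColim H eta m) (kappa H eta m)"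

definition ker_kappa_map :: "(zinf \<Rightarrow> zinf \<Rightarrow> int \<Rightarrow> ('r, 'a) rmod) \<Rightarrow> (zinf \<Rightarrow> zinf \<Rightarrow> zinf \<Rightarrow> zinf \<Rightarrow> int \<Rightarrow> 'a \<Rightarrow> 'a)
   \<Rightarrow> (zinf \<Rightarrow> zinf \<Rightarrow> int \<Rightarrow> 'a \<Rightarrow> 'a) \<Rightarrow> int
   \<Rightarrow> (int \<times> (int \<Rightarrow> 'a)) set \<Rightarrow> (int \<times> (int \<Rightarrow> 'a)) set" where
  "ker_kappa_map H' eta' f m c = (case rep c of (j, x) \<Rightarrow>
      colim_cls (LimH H' eta' m) (LimH_tr eta' m) UNIV
        (j, \<lambda>i. if i \<le> j then f (Fin i) (Fin j) m (x i) else undefined))"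

definition Wpp_map :: "(zinf \<Rightarrow> zinf \<Rightarrow> int \<Rightarrow> ('r, 'a) rmod) \<Rightarrow> (zinf \<Rightarrow> zinf \<Rightarrow> zinf \<Rightarrow> zinf \<Rightarrow> int \<Rightarrow> 'a \<Rightarrow> 'a)
   \<Rightarrow> (zinf \<Rightarrow> zinf \<Rightarrow> int \<Rightarrow> 'a \<Rightarrow> 'a) \<Rightarrow> int
   \<Rightarrow> (int \<times> (nat \<Rightarrow> 'a) set) set \<Rightarrow> (int \<times> (nat \<Rightarrow> 'a) set) set" where
  "Wpp_map H' eta' f n = Wmap (Acpl H' n) (alcpl eta' n) (\<lambda>s. f (Fin s) PInf n)"

end

theory Submission
  imports Defs
begin

text \<open>
  A class of \<open>W''\<close> in degree \<open>n\<close> is represented by an index \<open>s\<close> and a sequence \<open>a\<close> with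
  \<open>a r \<in> K\<^sub>\<infinity> im\<^sup>r A''\<^sub>s\<close>, taken modulo the coboundaries \<open>w r - w (r + 1)\<close> of \<open>lim\<^sup>1\<close> and
  modulo the colimit over \<open>s\<close>. By exactness, \<open>im\<^sup>r A''\<^sub>s\<close> is the kernel of
  \<open>\<partial> : H(s,\<infinity>) \<rightarrow> H(s - r,s)\<close>, so the boundary sums \<open>i \<mapsto> \<partial>(a 0 + \<dots> + a (s - i - 1)) \<in> H(i,s)\<close>
  form a compatible family, i.e. an element of \<open>lim\<^sub>i H(i,s)\<close> of degree \<open>n - 1\<close>; it lies in
  \<open>ker \<kappa>\<close> because every \<open>a r\<close> dies in \<open>colim A''\<close>. A coboundary only contributes \<open>\<partial>(w 0)\<close>,
  which also dies, so this defines \<open>W'' \<rightarrow> ker \<kappa>\<close>. If the boundary sums of a sequence vanish,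
  its partial sums \<open>P q\<close> lie in \<open>K\<^sub>\<infinity> im\<^sup>q A''\<close> and the sequence is the coboundary of \<open>-P\<close>:
  the map is injective. An element of \<open>ker \<kappa>\<close> is a family \<open>X i \<in> H(i,j)\<close> dying in
  \<open>colim\<^sub>j\<close>; exactness lifts each \<open>X i\<close> to some \<open>z i \<in> H(j,\<infinity>)\<close> dying in \<open>A''\<close>, and the
  differences \<open>z (j - r - 1) - z (j - r)\<close> have boundary sums \<open>X\<close>: the map is surjective.
  Naturality is a direct computation on representatives.
\<close>

section \<open>Modules, homomorphisms and finite sums\<close>

context
  fixes M :: "('r::ring_1, 'a) rmod"
  assumes M: "is_rmod M"
begin

lemma rmod_zero_carr: "mzero M \<in> carr M"
  using M unfolding is_rmod_def by metis

lemma rmod_add_carr: "x \<in> carr M \<Longrightarrow> y \<in> carr M \<Longrightarrow> madd M x y \<in> carr M"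
  using M unfolding is_rmod_def by metis

lemma rmod_neg_carr: "x \<in> carr M \<Longrightarrow> mneg M x \<in> carr M"
  using M unfolding is_rmod_def by metis

lemma rmod_smul_carr: "x \<in> carr M \<Longrightarrow> msmul M r x \<in> carr M"
  using M unfolding is_rmod_def by metis

lemma rmod_add_assoc:
  "x \<in> carr M \<Longrightarrow> y \<in> carr M \<Longrightarrow> z \<in> carr M \<Longrightarrow> madd M (madd M x y) z = madd M x (madd M y z)"
  using M unfolding is_rmod_def by metis

lemma rmod_add_comm: "x \<in> carr M \<Longrightarrow> y \<in> carr M \<Longrightarrow> madd M x y = madd M y x"
  using M unfolding is_rmod_def by metis

lemma rmod_zero_add: "x \<in> carr M \<Longrightarrow> madd M (mzero M) x = x"
  using M unfolding is_rmod_def by metis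

lemma rmod_add_zero: "x \<in> carr M \<Longrightarrow> madd M x (mzero M) = x"
  using rmod_zero_add rmod_add_comm rmod_zero_carr by metis

lemma rmod_neg_add_self: "x \<in> carr M \<Longrightarrow> madd M (mneg M x) x = mzero M"
  using M unfolding is_rmod_def by metis

lemma rmod_add_neg_self: "x \<in> carr M \<Longrightarrow> madd M x (mneg M x) = mzero M"
  using rmod_neg_add_self rmod_add_comm rmod_neg_carr by metis

lemma rmod_smul_add:
  "x \<in> carr M \<Longrightarrow> y \<in> carr M \<Longrightarrow> msmul M r (madd M x y) = madd M (msmul M r x) (msmul M r y)"
  using M unfolding is_rmod_def by metis

lemma rmod_add_left_cancel:
  assumes "x \<in> carr M" "y \<in> carr M" "z \<in> carr M" "madd M x y = madd M x z"
  shows "y = z"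
proof -
  have "madd M (madd M (mneg M x) x) y = madd M (madd M (mneg M x) x) z"
    using assms by (simp add: rmod_add_assoc rmod_neg_carr)
  then show ?thesis
    using assms by (simp add: rmod_neg_add_self rmod_zero_add)
qed

lemma rmod_neg_unique: "x \<in> carr M \<Longrightarrow> y \<in> carr M \<Longrightarrow> madd M x y = mzero M \<Longrightarrow> y = mneg M x"
  by (metis rmod_add_left_cancel rmod_neg_carr rmod_add_neg_self)

lemma rmod_neg_neg: "x \<in> carr M \<Longrightarrow> mneg M (mneg M x) = x"
  by (metis rmod_neg_carr rmod_neg_unique rmod_neg_add_self)

lemma rmod_neg_zero: "mneg M (mzero M) = mzero M"
  by (metis rmod_zero_carr rmod_neg_unique rmod_add_zero)

lemma rmod_add_add_swap:
  "a \<in> carr M \<Longrightarrow> b \<in> carr M \<Longrightarrow> c \<in> carr M \<Longrightarrow> d \<in> carr M \<Longrightarrow>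
   madd M (madd M a b) (madd M c d) = madd M (madd M a c) (madd M b d)"
  by (metis rmod_add_carr rmod_add_assoc rmod_add_comm)

lemma rmod_neg_distrib:
  assumes "x \<in> carr M" "y \<in> carr M"
  shows "mneg M (madd M x y) = madd M (mneg M x) (mneg M y)"
proof -
  have "madd M (madd M x y) (madd M (mneg M x) (mneg M y))
      = madd M (madd M x (mneg M x)) (madd M y (mneg M y))"
    using assms by (simp add: rmod_add_add_swap rmod_neg_carr)
  also have "\<dots> = mzero M"
    using assms by (simp add: rmod_add_neg_self rmod_zero_add rmod_zero_carr)
  finally show ?thesis
    using assms by (metis rmod_neg_unique rmod_add_carr rmod_neg_carr)
qed

lemma rmod_smul_zero: "msmul M r (mzero M) = mzero M"
proof -
  have "madd M (msmul M r (mzero M)) (msmul M r (mzero M)) = madd M (msmul M r (mzero M)) (mzero M)"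
    by (metis rmod_smul_add rmod_zero_carr rmod_zero_add rmod_add_zero rmod_smul_carr)
  then show ?thesis
    by (metis rmod_add_left_cancel rmod_smul_carr rmod_zero_carr)
qed

lemma rmod_smul_neg: "x \<in> carr M \<Longrightarrow> msmul M r (mneg M x) = mneg M (msmul M r x)"
  by (metis rmod_neg_carr rmod_neg_unique rmod_add_neg_self rmod_smul_carr rmod_smul_add rmod_smul_zero)

end

lemma rmod_submodule:
  assumes "is_rmod M" "S \<subseteq> carr M" "mzero M \<in> S"
    "\<And>x y. x \<in> S \<Longrightarrow> y \<in> S \<Longrightarrow> madd M x y \<in> S"
    "\<And>x. x \<in> S \<Longrightarrow> mneg M x \<in> S" "\<And>r x. x \<in> S \<Longrightarrow> msmul M r x \<in> S"
  shows "is_rmod (M\<lparr>carr := S\<rparr>)"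
  using assms(1) unfolding is_rmod_def rmod.simps
  by (elim conjE, intro conjI) (use assms(2-) in \<open>simp_all add: subset_iff\<close>)

lemma hom_carr: "is_hom M N f \<Longrightarrow> x \<in> carr M \<Longrightarrow> f x \<in> carr N"
  by (simp add: is_hom_def)

lemma hom_add: "is_hom M N f \<Longrightarrow> x \<in> carr M \<Longrightarrow> y \<in> carr M \<Longrightarrow> f (madd M x y) = madd N (f x) (f y)"
  by (simp add: is_hom_def)

lemma hom_smul: "is_hom M N f \<Longrightarrow> x \<in> carr M \<Longrightarrow> f (msmul M r x) = msmul N r (f x)"
  by (simp add: is_hom_def)

lemma hom_zero:
  assumes "is_rmod M" "is_rmod N" "is_hom M N f"
  shows "f (mzero M) = mzero N"
proof -
  have z: "mzero M \<in> carr M"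
    by (rule rmod_zero_carr[OF assms(1)])
  have fz: "f (mzero M) \<in> carr N"
    by (rule hom_carr[OF assms(3) z])
  have "madd N (f (mzero M)) (f (mzero M)) = f (mzero M)"
    using hom_add[OF assms(3) z z] rmod_zero_add[OF assms(1) z] by simp
  also have "\<dots> = madd N (f (mzero M)) (mzero N)"
    using rmod_add_zero[OF assms(2) fz] by simp
  finally show ?thesis
    using rmod_add_left_cancel[OF assms(2) fz fz rmod_zero_carr[OF assms(2)]] by simp
qed

lemma hom_neg:
  assumes "is_rmod M" "is_rmod N" "is_hom M N f" "x \<in> carr M"
  shows "f (mneg M x) = mneg N (f x)"
proof -
  have "madd N (f x) (f (mneg M x)) = mzero N"
    using hom_add[OF assms(3) assms(4) rmod_neg_carr[OF assms(1) assms(4)]]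
      rmod_add_neg_self[OF assms(1) assms(4)] hom_zero[OF assms(1-3)] by simp
  then show ?thesis
    using rmod_neg_unique[OF assms(2)] hom_carr[OF assms(3)] assms(4) rmod_neg_carr[OF assms(1)] by metis
qed

fun msum :: "('r, 'a) rmod \<Rightarrow> (nat \<Rightarrow> 'a) \<Rightarrow> nat \<Rightarrow> 'a" where
  "msum M a 0 = mzero M"
| "msum M a (Suc k) = madd M (msum M a k) (a k)"

context
  fixes M :: "('r::ring_1, 'a) rmod"
  assumes M: "is_rmod M"
begin

lemma msum_carr: "(\<And>r. a r \<in> carr M) \<Longrightarrow> msum M a k \<in> carr M"
  by (induction k) (auto simp: rmod_zero_carr[OF M] rmod_add_carr[OF M])

lemma msum_add:
  assumes "\<And>r. a r \<in> carr M" "\<And>r. b r \<in> carr M"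
  shows "msum M (\<lambda>r. madd M (a r) (b r)) k = madd M (msum M a k) (msum M b k)"
proof (induction k)
  case 0
  then show ?case by (simp add: rmod_zero_add[OF M] rmod_zero_carr[OF M])
next
  case (Suc k)
  then show ?case
    using rmod_add_add_swap[OF M msum_carr[OF assms(1)] msum_carr[OF assms(2)] assms] by simp
qed

lemma msum_neg:
  assumes "\<And>r. a r \<in> carr M"
  shows "msum M (\<lambda>r. mneg M (a r)) k = mneg M (msum M a k)"
  by (induction k) (simp_all add: rmod_neg_zero[OF M] rmod_neg_distrib[OF M] msum_carr assms)

lemma msum_smul:
  assumes "\<And>r. a r \<in> carr M"
  shows "msum M (\<lambda>r. msmul M c (a r)) k = msmul M c (msum M a k)"
  by (induction k) (simp_all add: rmod_smul_zero[OF M] rmod_smul_add[OF M] msum_carr assms)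

lemma msum_telescope:
  assumes "\<And>r. w r \<in> carr M"
  shows "msum M (\<lambda>r. madd M (w r) (mneg M (w (Suc r)))) k = madd M (w 0) (mneg M (w k))"
proof (induction k)
  case 0
  then show ?case using assms by (simp add: rmod_add_neg_self[OF M])
next
  case (Suc k)
  have "madd M (madd M (w 0) (mneg M (w k))) (madd M (w k) (mneg M (w (Suc k))))
      = madd M (w 0) (madd M (madd M (mneg M (w k)) (w k)) (mneg M (w (Suc k))))"
    using assms by (simp add: rmod_add_assoc[OF M] rmod_neg_carr[OF M] rmod_add_carr[OF M])
  also have "\<dots> = madd M (w 0) (mneg M (w (Suc k)))"
    using assms by (simp add: rmod_neg_add_self[OF M] rmod_zero_add[OF M] rmod_neg_carr[OF M])
  finally show ?case using Suc by simp
qed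

lemma msum_forward_telescope:
  assumes "\<And>r. f r \<in> carr M"
  shows "msum M (\<lambda>r. madd M (f (Suc r)) (mneg M (f r))) k = madd M (f k) (mneg M (f 0))"
proof (induction k)
  case 0
  then show ?case using assms by (simp add: rmod_add_neg_self[OF M])
next
  case (Suc k)
  have "madd M (madd M (f k) (mneg M (f 0))) (madd M (f (Suc k)) (mneg M (f k)))
      = madd M (madd M (f (Suc k)) (madd M (f k) (mneg M (f k)))) (mneg M (f 0))"
    using assms by (metis rmod_add_assoc[OF M] rmod_add_comm[OF M] rmod_add_carr[OF M] rmod_neg_carr[OF M])
  also have "\<dots> = madd M (f (Suc k)) (mneg M (f 0))"
    using assms by (simp add: rmod_add_neg_self[OF M] rmod_add_zero[OF M])
  finally show ?case using Suc by simp
qed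

lemma neg_msum_diff:
  assumes "\<And>r. e r \<in> carr M"
  shows "madd M (mneg M (msum M e k)) (mneg M (mneg M (msum M e (Suc k)))) = e k"
proof -
  have P: "msum M e k \<in> carr M" by (rule msum_carr[OF assms])
  have "madd M (mneg M (msum M e k)) (msum M e (Suc k))
      = madd M (madd M (mneg M (msum M e k)) (msum M e k)) (e k)"
    using P assms by (simp add: rmod_add_assoc[OF M] rmod_neg_carr[OF M])
  then show ?thesis
    using P assms by (simp add: rmod_neg_neg[OF M] rmod_add_carr[OF M] rmod_neg_add_self[OF M] rmod_zero_add[OF M])
qed

lemma additive_msum_stable:
  assumes N: "is_rmod N"
    and F_add: "\<And>x y. x \<in> carr M \<Longrightarrow> y \<in> carr M \<Longrightarrow> F (madd M x y) = madd N (F x) (F y)"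
    and F_carr: "\<And>x. x \<in> carr M \<Longrightarrow> F x \<in> carr N"
    and a: "\<And>r. a r \<in> carr M"
    and vanish: "\<And>r. k0 \<le> r \<Longrightarrow> F (a r) = mzero N"
    and "k0 \<le> k"
  shows "F (msum M a k) = F (msum M a k0)"
  using \<open>k0 \<le> k\<close>
proof (induction k rule: dec_induct)
  case (step k)
  then show ?case
    using F_add[OF msum_carr[OF a] a] vanish rmod_add_zero[OF N F_carr[OF msum_carr[OF a]]] by simp
qed simp

end

lemma hom_msum:
  assumes "is_rmod M" "is_rmod N" "is_hom M N F" "\<And>r. a r \<in> carr M"
  shows "F (msum M a k) = msum N (\<lambda>r. F (a r)) k"
  by (induction k)
    (simp_all add: hom_zero[OF assms(1-3)] hom_add[OF assms(3)] msum_carr[OF assms(1)] assms(4))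

section \<open>Sequential colimits\<close>

definition push :: "(int \<Rightarrow> 'a \<Rightarrow> 'a) \<Rightarrow> int \<Rightarrow> int \<Rightarrow> 'a \<Rightarrow> 'a" where
  "push t j u x = iter t j (nat (u - j)) x"

lemma iter_add: "iter t j (a + b) x = iter t (j + int a) b (iter t j a x)"
  by (induction b) (simp_all add: algebra_simps)

lemma push_push:
  assumes "j \<le> m" "m \<le> u"
  shows "push t m u (push t j m x) = push t j u x"
proof -
  have "nat (u - j) = nat (m - j) + nat (u - m)" using assms by simp
  then show ?thesis unfolding push_def using assms by (simp add: iter_add)
qed

lemma push_self [simp]: "push t j j x = x"
  by (simp add: push_def)

lemma push_step:
  assumes "j \<le> u"
  shows "push t j (u + 1) x = t (u + 1) (push t j u x)"
proof -
  have "nat (u + 1 - j) = Suc (nat (u - j))" using assms by simp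
  then show ?thesis using assms by (simp add: push_def)
qed

lemma colim_rel_iff:
  "colim_rel t (j, x) (k, y) \<longleftrightarrow> (\<exists>m. j \<le> m \<and> k \<le> m \<and> push t j m x = push t k m y)"
  by (simp add: colim_rel_def push_def)

lemma push_eq_mono:
  "push t j m x = push t k m y \<Longrightarrow> j \<le> m \<Longrightarrow> k \<le> m \<Longrightarrow> m \<le> u \<Longrightarrow> push t j u x = push t k u y"
  by (metis push_push)

lemma colim_rel_refl: "colim_rel t p p"
  by (auto simp: colim_rel_def)

lemma colim_rel_sym: "colim_rel t p q \<Longrightarrow> colim_rel t q p"
  by (auto simp: colim_rel_def)

lemma colim_rel_trans:
  assumes "colim_rel t p q" "colim_rel t q r"
  shows "colim_rel t p r"
proof -
  obtain j x k y l z where e: "p = (j, x)" "q = (k, y)" "r = (l, z)"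
    by (metis prod.exhaust)
  from assms e obtain m1 m2 where m: "j \<le> m1" "k \<le> m1" "push t j m1 x = push t k m1 y"
    "k \<le> m2" "l \<le> m2" "push t k m2 y = push t l m2 z"
    by (auto simp: colim_rel_iff)
  let ?m = "max m1 m2"
  have "push t j ?m x = push t k ?m y" using push_eq_mono[OF m(3)] m by simp
  also have "\<dots> = push t l ?m z" using push_eq_mono[OF m(6)] m by simp
  finally show ?thesis using e m by (auto simp: colim_rel_iff intro!: exI[of _ ?m])
qed

locale direct_system =
  fixes M :: "int \<Rightarrow> ('r::ring_1, 'a) rmod" and t :: "int \<Rightarrow> 'a \<Rightarrow> 'a" and J :: "int set"
  assumes index_up_closed: "j \<in> J \<Longrightarrow> j \<le> k \<Longrightarrow> k \<in> J"
    and map_carr: "k - 1 \<in> J \<Longrightarrow> x \<in> carr (M (k - 1)) \<Longrightarrow> t k x \<in> carr (M k)"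
begin

abbreviation "cls \<equiv> colim_cls M t J"

lemma push_carr:
  assumes "j \<in> J" "x \<in> carr (M j)" "j \<le> u"
  shows "push t j u x \<in> carr (M u)"
  using assms(3)
proof (induction rule: int_ge_induct)
  case (step v)
  then show ?case using assms map_carr[of "v + 1"] index_up_closed by (simp add: push_step)
qed (use assms in simp)

lemma cls_eq_iff:
  assumes "j \<in> J" "k \<in> J" "x \<in> carr (M j)" "y \<in> carr (M k)"
  shows "cls (j, x) = cls (k, y) \<longleftrightarrow> (\<exists>m. j \<le> m \<and> k \<le> m \<and> push t j m x = push t k m y)"
proof
  assume "cls (j, x) = cls (k, y)"
  moreover have "(k, y) \<in> cls (k, y)" using assms by (simp add: colim_cls_def colim_rel_refl)
  ultimately have "(k, y) \<in> cls (j, x)" by simp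
  then have "colim_rel t (j, x) (k, y)" by (simp add: colim_cls_def)
  then show "\<exists>m. j \<le> m \<and> k \<le> m \<and> push t j m x = push t k m y"
    by (simp add: colim_rel_iff)
next
  assume "\<exists>m. j \<le> m \<and> k \<le> m \<and> push t j m x = push t k m y"
  then have r: "colim_rel t (j, x) (k, y)" by (simp add: colim_rel_iff)
  show "cls (j, x) = cls (k, y)" unfolding colim_cls_def
    using colim_rel_trans[OF r] colim_rel_trans[OF colim_rel_sym[OF r]] by auto
qed

lemma carr_colim: "c \<in> carr (colim M t J) \<longleftrightarrow> (\<exists>j x. j \<in> J \<and> x \<in> carr (M j) \<and> c = cls (j, x))"
  by (auto simp: colim_def)

lemma cls_in_carr: "j \<in> J \<Longrightarrow> x \<in> carr (M j) \<Longrightarrow> cls (j, x) \<in> carr (colim M t J)"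
  by (auto simp: carr_colim)

lemma rep_cls:
  assumes "j \<in> J" "x \<in> carr (M j)" "rep (cls (j, x)) = (j', x')"
  shows "j' \<in> J" "x' \<in> carr (M j')" "cls (j', x') = cls (j, x)"
proof -
  have "(j, x) \<in> cls (j, x)" using assms by (simp add: colim_cls_def colim_rel_refl)
  then have "(j', x') \<in> cls (j, x)" using assms(3) unfolding rep_def by (metis someI)
  then show j: "j' \<in> J" and x: "x' \<in> carr (M j')" and "cls (j', x') = cls (j, x)"
    using cls_eq_iff[of j' j x' x] assms(1,2) by (auto simp: colim_cls_def colim_rel_iff)
qed

lemma push_add:
  assumes t_add: "\<And>k x y. k - 1 \<in> J \<Longrightarrow> x \<in> carr (M (k - 1)) \<Longrightarrow> y \<in> carr (M (k - 1)) \<Longrightarrow>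
            t k (madd (M (k - 1)) x y) = madd (M k) (t k x) (t k y)"
    and "l \<in> J" "x \<in> carr (M l)" "y \<in> carr (M l)" "l \<le> u"
  shows "push t l u (madd (M l) x y) = madd (M u) (push t l u x) (push t l u y)"
  using \<open>l \<le> u\<close>
proof (induction rule: int_ge_induct)
  case (step v)
  then show ?case using assms push_carr[of l _ v] t_add[of "v + 1"] index_up_closed by (simp add: push_step)
qed simp

lemma push_smul:
  assumes t_smul: "\<And>k x. k - 1 \<in> J \<Longrightarrow> x \<in> carr (M (k - 1)) \<Longrightarrow> t k (msmul (M (k - 1)) r x) = msmul (M k) r (t k x)"
    and "l \<in> J" "x \<in> carr (M l)" "l \<le> u"
  shows "push t l u (msmul (M l) r x) = msmul (M u) r (push t l u x)"
  using \<open>l \<le> u\<close>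
proof (induction rule: int_ge_induct)
  case (step v)
  then show ?case using assms push_carr[of l _ v] t_smul[of "v + 1"] index_up_closed by (simp add: push_step)
qed simp

lemma push_zero:
  assumes t_zero: "\<And>k. k - 1 \<in> J \<Longrightarrow> t k (mzero (M (k - 1))) = mzero (M k)"
    and "l \<in> J" "l \<le> u"
  shows "push t l u (mzero (M l)) = mzero (M u)"
  using \<open>l \<le> u\<close>
proof (induction rule: int_ge_induct)
  case (step v)
  then show ?case using assms t_zero[of "v + 1"] index_up_closed by (simp add: push_step)
qed simp

lemma cls_add:
  assumes t_add: "\<And>k x y. k - 1 \<in> J \<Longrightarrow> x \<in> carr (M (k - 1)) \<Longrightarrow> y \<in> carr (M (k - 1)) \<Longrightarrow>
            t k (madd (M (k - 1)) x y) = madd (M k) (t k x) (t k y)"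
    and add_carr: "\<And>j x y. j \<in> J \<Longrightarrow> x \<in> carr (M j) \<Longrightarrow> y \<in> carr (M j) \<Longrightarrow> madd (M j) x y \<in> carr (M j)"
    and a: "j \<in> J" "k \<in> J" "x \<in> carr (M j)" "y \<in> carr (M k)" "j \<le> m" "k \<le> m"
  shows "madd (colim M t J) (cls (j, x)) (cls (k, y)) = cls (m, madd (M m) (push t j m x) (push t k m y))"
proof -
  obtain j1 x1 where r1: "rep (cls (j, x)) = (j1, x1)" by (metis prod.exhaust)
  obtain k1 y1 where r2: "rep (cls (k, y)) = (k1, y1)" by (metis prod.exhaust)
  note R1 = rep_cls[OF a(1) a(3) r1] and R2 = rep_cls[OF a(2) a(4) r2]
  let ?p = "max j1 k1"
  have lhs: "madd (colim M t J) (cls (j, x)) (cls (k, y))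
      = cls (?p, madd (M ?p) (push t j1 ?p x1) (push t k1 ?p y1))"
    by (simp add: colim_def r1 r2 push_def Let_def)
  obtain u1 where u1: "j1 \<le> u1" "j \<le> u1" "push t j1 u1 x1 = push t j u1 x"
    using R1 cls_eq_iff[of j1 j x1 x] a by auto
  obtain u2 where u2: "k1 \<le> u2" "k \<le> u2" "push t k1 u2 y1 = push t k u2 y"
    using R2 cls_eq_iff[of k1 k y1 y] a by auto
  define u where "u = max (max u1 u2) (max ?p m)"
  have u: "u1 \<le> u" "u2 \<le> u" "?p \<le> u" "m \<le> u"
    by (auto simp: u_def)
  have pJ: "?p \<in> J" "m \<in> J"
    using R1 R2 a index_up_closed by (metis max_def)+
  have pc: "push t j1 ?p x1 \<in> carr (M ?p)" "push t k1 ?p y1 \<in> carr (M ?p)"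
    "push t j m x \<in> carr (M m)" "push t k m y \<in> carr (M m)"
    using push_carr R1 R2 a by auto
  have "push t ?p u (push t j1 ?p x1) = push t j1 u x1" "push t ?p u (push t k1 ?p y1) = push t k1 u y1"
    by (rule push_push; use u(3) in simp)+
  then have "push t ?p u (madd (M ?p) (push t j1 ?p x1) (push t k1 ?p y1))
      = madd (M u) (push t j1 u x1) (push t k1 u y1)"
    using push_add[OF t_add pJ(1) pc(1,2) u(3)] by simp
  also have "\<dots> = madd (M u) (push t j u x) (push t k u y)"
    using push_eq_mono[OF u1(3)] push_eq_mono[OF u2(3)] u1 u2 u by simp
  also have "\<dots> = push t m u (madd (M m) (push t j m x) (push t k m y))"
    using push_add[OF t_add pJ(2) pc(3,4) u(4)] push_push[OF a(5) u(4), of t x] push_push[OF a(6) u(4), of t y] by simp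
  finally have "cls (?p, madd (M ?p) (push t j1 ?p x1) (push t k1 ?p y1))
      = cls (m, madd (M m) (push t j m x) (push t k m y))"
    using cls_eq_iff[OF pJ add_carr[OF pJ(1) pc(1,2)] add_carr[OF pJ(2) pc(3,4)]] u(3,4) by blast
  then show ?thesis using lhs by simp
qed

lemma cls_smul:
  assumes t_smul: "\<And>k x. k - 1 \<in> J \<Longrightarrow> x \<in> carr (M (k - 1)) \<Longrightarrow>
            t k (msmul (M (k - 1)) r x) = msmul (M k) r (t k x)"
    and smul_carr: "\<And>j x. j \<in> J \<Longrightarrow> x \<in> carr (M j) \<Longrightarrow> msmul (M j) r x \<in> carr (M j)"
    and a: "j \<in> J" "x \<in> carr (M j)"
  shows "msmul (colim M t J) r (cls (j, x)) = cls (j, msmul (M j) r x)"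
proof -
  obtain j1 x1 where r1: "rep (cls (j, x)) = (j1, x1)" by (metis prod.exhaust)
  note R1 = rep_cls[OF a r1]
  obtain u1 where u1: "j1 \<le> u1" "j \<le> u1" "push t j1 u1 x1 = push t j u1 x"
    using R1 cls_eq_iff[of j1 j x1 x] a by auto
  have "push t j1 u1 (msmul (M j1) r x1) = push t j u1 (msmul (M j) r x)"
    using push_smul[OF t_smul, of j1 x1 u1] push_smul[OF t_smul, of j x u1] R1 a u1 by simp
  then show ?thesis
    using cls_eq_iff[of j1 j "msmul (M j1) r x1" "msmul (M j) r x"] R1 a smul_carr u1
    by (auto simp: colim_def r1)
qed

lemma cls_eq_zero_iff:
  assumes t_zero: "\<And>k. k - 1 \<in> J \<Longrightarrow> t k (mzero (M (k - 1))) = mzero (M k)"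
    and zero_carr: "\<And>j. j \<in> J \<Longrightarrow> mzero (M j) \<in> carr (M j)"
    and a: "j \<in> J" "x \<in> carr (M j)"
  shows "cls (j, x) = mzero (colim M t J) \<longleftrightarrow> (\<exists>u. j \<le> u \<and> push t j u x = mzero (M u))"
proof -
  define j0 where "j0 = (SOME j. j \<in> J)"
  have j0: "j0 \<in> J" using a j0_def by (metis someI)
  have z: "mzero (colim M t J) = cls (j0, mzero (M j0))"
    by (simp add: colim_def j0_def Let_def)
  show ?thesis
  proof
    assume "cls (j, x) = mzero (colim M t J)"
    then obtain m where "j \<le> m" "j0 \<le> m" "push t j m x = push t j0 m (mzero (M j0))"
      using z cls_eq_iff[OF a(1) j0 a(2) zero_carr[OF j0]] by auto
    then show "\<exists>u. j \<le> u \<and> push t j u x = mzero (M u)" using push_zero[OF t_zero j0] by auto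
  next
    assume "\<exists>u. j \<le> u \<and> push t j u x = mzero (M u)"
    then obtain u where u: "j \<le> u" "push t j u x = mzero (M u)" by auto
    let ?m = "max u j0"
    have "push t j ?m x = push t u ?m (push t j u x)"
      by (rule push_push[symmetric]) (use u in auto)
    also have "\<dots> = push t j0 ?m (mzero (M j0))"
      using u push_zero[OF t_zero, of u ?m] push_zero[OF t_zero j0, of ?m] index_up_closed[OF a(1) u(1)] by simp
    finally show "cls (j, x) = mzero (colim M t J)"
      using z cls_eq_iff[OF a(1) j0 a(2) zero_carr[OF j0]] u(1) by fastforce
  qed
qed

end

section \<open>The derived limit of a tower\<close>

locale tower =
  fixes M :: "nat \<Rightarrow> ('r::ring_1, 'a) rmod" and t :: "nat \<Rightarrow> 'a \<Rightarrow> 'a"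
  assumes rmod: "is_rmod (M n)" and hom: "is_hom (M (Suc n)) (M n) (t n)"
begin

definition Seq :: "(nat \<Rightarrow> 'a) set" where
  "Seq = {y. \<forall>n. y n \<in> carr (M n)}"

abbreviation "delta \<equiv> lim1_delta M t"
abbreviation "lcls \<equiv> lim1_cls M t"

lemma SeqD: "y \<in> Seq \<Longrightarrow> y n \<in> carr (M n)"
  by (simp add: Seq_def)

lemma map_carr: "x \<in> carr (M (Suc n)) \<Longrightarrow> t n x \<in> carr (M n)"
  by (rule hom_carr[OF hom])

lemma Seq_add: "w \<in> Seq \<Longrightarrow> w' \<in> Seq \<Longrightarrow> (\<lambda>n. madd (M n) (w n) (w' n)) \<in> Seq"
  by (simp add: Seq_def rmod_add_carr[OF rmod])

lemma Seq_neg: "w \<in> Seq \<Longrightarrow> (\<lambda>n. mneg (M n) (w n)) \<in> Seq"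
  by (simp add: Seq_def rmod_neg_carr[OF rmod])

lemma Seq_smul: "w \<in> Seq \<Longrightarrow> (\<lambda>n. msmul (M n) r (w n)) \<in> Seq"
  by (simp add: Seq_def rmod_smul_carr[OF rmod])

lemma Seq_zero: "(\<lambda>n. mzero (M n)) \<in> Seq"
  by (simp add: Seq_def rmod_zero_carr[OF rmod])

lemma delta_carr: "w \<in> Seq \<Longrightarrow> delta w n \<in> carr (M n)"
  by (simp add: lim1_delta_def Seq_def rmod_add_carr[OF rmod] rmod_neg_carr[OF rmod] map_carr)

lemma delta_add:
  assumes "w \<in> Seq" "w' \<in> Seq"
  shows "delta (\<lambda>n. madd (M n) (w n) (w' n)) n = madd (M n) (delta w n) (delta w' n)"
proof -
  have a: "w (Suc n) \<in> carr (M (Suc n))" "w' (Suc n) \<in> carr (M (Suc n))"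
    using assms by (auto simp: SeqD)
  show ?thesis
    unfolding lim1_delta_def hom_add[OF hom a]
    using assms a map_carr
    by (simp add: rmod_neg_distrib[OF rmod] rmod_add_add_swap[OF rmod] rmod_neg_carr[OF rmod] SeqD)
qed

lemma delta_neg:
  assumes "w \<in> Seq"
  shows "delta (\<lambda>n. mneg (M n) (w n)) n = mneg (M n) (delta w n)"
  unfolding lim1_delta_def hom_neg[OF rmod rmod hom SeqD[OF assms]]
  using assms map_carr by (simp add: rmod_neg_distrib[OF rmod] rmod_neg_carr[OF rmod] SeqD)

lemma delta_smul:
  assumes "w \<in> Seq"
  shows "delta (\<lambda>n. msmul (M n) r (w n)) n = msmul (M n) r (delta w n)"
  unfolding lim1_delta_def hom_smul[OF hom SeqD[OF assms]]
  using assms map_carr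
  by (simp add: rmod_smul_add[OF rmod] rmod_neg_carr[OF rmod] rmod_smul_neg[OF rmod] SeqD)

lemma delta_zero: "delta (\<lambda>n. mzero (M n)) n = mzero (M n)"
  unfolding lim1_delta_def hom_zero[OF rmod rmod hom]
  by (simp add: rmod_neg_zero[OF rmod] rmod_zero_add[OF rmod] rmod_zero_carr[OF rmod])

lemma lcls_mem_iff: "z \<in> lcls y \<longleftrightarrow> z \<in> Seq \<and> (\<exists>w\<in>Seq. \<forall>n. z n = madd (M n) (y n) (delta w n))"
  by (simp add: lim1_cls_def Seq_def)

lemma lcls_refl: "y \<in> Seq \<Longrightarrow> y \<in> lcls y"
  unfolding lcls_mem_iff using Seq_zero delta_zero
  by (auto intro!: bexI[of _ "\<lambda>n. mzero (M n)"] simp: SeqD rmod_add_zero[OF rmod])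

lemma lcls_trans:
  assumes "y \<in> Seq" "z \<in> lcls y" "q \<in> lcls z"
  shows "q \<in> lcls y"
proof -
  obtain w where w: "w \<in> Seq" "\<And>n. z n = madd (M n) (y n) (delta w n)"
    using assms lcls_mem_iff by auto
  obtain w' where w': "w' \<in> Seq" "\<And>n. q n = madd (M n) (z n) (delta w' n)"
    using assms lcls_mem_iff by auto
  have "q n = madd (M n) (y n) (delta (\<lambda>n. madd (M n) (w n) (w' n)) n)" for n
    using w w' assms delta_add[OF w(1) w'(1)] by (simp add: rmod_add_assoc[OF rmod] SeqD delta_carr)
  then show ?thesis
    using assms(3) lcls_mem_iff Seq_add[OF w(1) w'(1)] by auto
qed

lemma lcls_sym:
  assumes "y \<in> Seq" "z \<in> lcls y"
  shows "y \<in> lcls z"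
proof -
  obtain w where w: "w \<in> Seq" "\<And>n. z n = madd (M n) (y n) (delta w n)"
    using assms lcls_mem_iff by auto
  have "y n = madd (M n) (z n) (delta (\<lambda>n. mneg (M n) (w n)) n)" for n
    using w(2)[of n] delta_neg[OF w(1), of n] delta_carr[OF w(1), of n] SeqD[OF assms(1), of n]
    by (simp add: rmod_add_assoc[OF rmod] rmod_neg_carr[OF rmod] rmod_add_neg_self[OF rmod]
        rmod_add_zero[OF rmod])
  then show ?thesis
    using assms lcls_mem_iff Seq_neg[OF w(1)] by auto
qed

lemma lcls_eq_iff:
  assumes "y \<in> Seq" "z \<in> Seq"
  shows "lcls y = lcls z \<longleftrightarrow> z \<in> lcls y"
proof
  assume "z \<in> lcls y"
  then show "lcls y = lcls z"
    using lcls_trans[OF assms(1)] lcls_trans[OF assms(2) lcls_sym[OF assms(1)]] by blast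
qed (use lcls_refl[OF assms(2)] in simp)

lemma carr_lim1: "c \<in> carr (lim1 M t) \<longleftrightarrow> (\<exists>y\<in>Seq. c = lcls y)"
  by (auto simp: lim1_def Seq_def)

lemma rep_lcls:
  assumes "y \<in> Seq"
  shows "rep (lcls y) \<in> lcls y" "rep (lcls y) \<in> Seq" "lcls (rep (lcls y)) = lcls y"
proof -
  show r: "rep (lcls y) \<in> lcls y"
    using someI[of "\<lambda>p. p \<in> lcls y" y] lcls_refl[OF assms] unfolding rep_def by blast
  then show p: "rep (lcls y) \<in> Seq" using lcls_mem_iff by auto
  show "lcls (rep (lcls y)) = lcls y" using lcls_eq_iff[OF assms p] r by simp
qed

lemma lcls_add:
  assumes "y \<in> Seq" "z \<in> Seq"
  shows "madd (lim1 M t) (lcls y) (lcls z) = lcls (\<lambda>n. madd (M n) (y n) (z n))"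
proof -
  obtain w where w: "w \<in> Seq" "\<And>n. rep (lcls y) n = madd (M n) (y n) (delta w n)"
    using rep_lcls[OF assms(1)] lcls_mem_iff by auto
  obtain w' where w': "w' \<in> Seq" "\<And>n. rep (lcls z) n = madd (M n) (z n) (delta w' n)"
    using rep_lcls[OF assms(2)] lcls_mem_iff by auto
  have "madd (M n) (rep (lcls y) n) (rep (lcls z) n)
      = madd (M n) (madd (M n) (y n) (z n)) (delta (\<lambda>n. madd (M n) (w n) (w' n)) n)" for n
    using w w' delta_add[OF w(1) w'(1)]
      rmod_add_add_swap[OF rmod SeqD[OF assms(1)] delta_carr[OF w(1)] SeqD[OF assms(2)] delta_carr[OF w'(1)]]
    by simp
  then have "(\<lambda>n. madd (M n) (rep (lcls y) n) (rep (lcls z) n)) \<in> lcls (\<lambda>n. madd (M n) (y n) (z n))"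
    unfolding lcls_mem_iff using Seq_add[OF w(1) w'(1)] Seq_add[OF rep_lcls(2)[OF assms(1)] rep_lcls(2)[OF assms(2)]]
    by auto
  then show ?thesis
    using lcls_eq_iff[OF Seq_add[OF assms] Seq_add[OF rep_lcls(2)[OF assms(1)] rep_lcls(2)[OF assms(2)]]]
    by (simp add: lim1_def)
qed

lemma lcls_smul:
  assumes "y \<in> Seq"
  shows "msmul (lim1 M t) r (lcls y) = lcls (\<lambda>n. msmul (M n) r (y n))"
proof -
  obtain w where w: "w \<in> Seq" "\<And>n. rep (lcls y) n = madd (M n) (y n) (delta w n)"
    using rep_lcls[OF assms] lcls_mem_iff by auto
  have "msmul (M n) r (rep (lcls y) n) = madd (M n) (msmul (M n) r (y n)) (delta (\<lambda>n. msmul (M n) r (w n)) n)" for n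
    using w assms delta_smul[OF w(1)] by (simp add: rmod_smul_add[OF rmod] SeqD delta_carr)
  then have "(\<lambda>n. msmul (M n) r (rep (lcls y) n)) \<in> lcls (\<lambda>n. msmul (M n) r (y n))"
    unfolding lcls_mem_iff using Seq_smul[OF w(1)] Seq_smul[OF rep_lcls(2)[OF assms]] by blast
  then show ?thesis
    using lcls_eq_iff[OF Seq_smul[OF assms, of r] Seq_smul[OF rep_lcls(2)[OF assms], of r]] by (simp add: lim1_def)
qed

end

lemma lim1_cls_map:
  assumes T: "tower M t" and T': "tower M' t'"
    and g: "\<And>n. is_hom (M n) (M' n) (g n)"
    and g_commute: "\<And>n x. x \<in> carr (M (Suc n)) \<Longrightarrow> g n (t n x) = t' n (g (Suc n) x)"
    and y: "y \<in> tower.Seq M"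
  shows "lim1_cls M' t' (\<lambda>n. g n (rep (lim1_cls M t y) n)) = lim1_cls M' t' (\<lambda>n. g n (y n))"
proof -
  interpret A: tower M t by fact
  interpret B: tower M' t' by fact
  obtain w where w: "w \<in> A.Seq" "\<And>n. rep (A.lcls y) n = madd (M n) (y n) (A.delta w n)"
    using A.rep_lcls[OF y] A.lcls_mem_iff by auto
  have gw: "(\<lambda>n. g n (w n)) \<in> B.Seq" "(\<lambda>n. g n (y n)) \<in> B.Seq" "(\<lambda>n. g n (rep (A.lcls y) n)) \<in> B.Seq"
    using w y A.rep_lcls(2)[OF y] g hom_carr by (fastforce simp: A.Seq_def B.Seq_def)+
  have "g n (A.delta w n) = B.delta (\<lambda>n. g n (w n)) n" for n
    unfolding lim1_delta_def
    using A.SeqD[OF w(1)] A.map_carr hom_add[OF g] hom_neg[OF A.rmod B.rmod g] g_commute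
    by (simp add: rmod_neg_carr[OF A.rmod])
  then have "g n (rep (A.lcls y) n) = madd (M' n) (g n (y n)) (B.delta (\<lambda>n. g n (w n)) n)" for n
    using w(2) hom_add[OF g A.SeqD[OF y] A.delta_carr[OF w(1)]] by simp
  then show ?thesis
    using B.lcls_eq_iff[OF gw(2) gw(3)] gw unfolding B.lcls_mem_iff by auto
qed

section \<open>Right Cartan-Eilenberg systems\<close>

lemma zle_refl [simp]: "zle i i"
  by (cases i) auto

locale right_CE_system =
  fixes H :: "zinf \<Rightarrow> zinf \<Rightarrow> int \<Rightarrow> ('r::ring_1, 'a) rmod"
    and eta :: "zinf \<Rightarrow> zinf \<Rightarrow> zinf \<Rightarrow> zinf \<Rightarrow> int \<Rightarrow> 'a \<Rightarrow> 'a"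
    and del :: "zinf \<Rightarrow> zinf \<Rightarrow> zinf \<Rightarrow> int \<Rightarrow> 'a \<Rightarrow> 'a"
  assumes right_CE: "right_CE H eta del"
begin

lemma H_rmod: "zle i j \<Longrightarrow> is_rmod (H i j n)"
  using right_CE unfolding right_CE_def by (elim conjE) (simp only:)

lemma eta_hom:
  "zle i j \<Longrightarrow> zle i' j' \<Longrightarrow> zle i i' \<Longrightarrow> zle j j' \<Longrightarrow> is_hom (H i j n) (H i' j' n) (eta i j i' j' n)"
  using right_CE unfolding right_CE_def by (elim conjE) (simp only:)

lemma eta_id: "x \<in> carr (H i j n) \<Longrightarrow> zle i j \<Longrightarrow> eta i j i j n x = x"
  using right_CE unfolding right_CE_def by (elim conjE) (simp only:)

lemma eta_comp:
  "x \<in> carr (H i j n) \<Longrightarrow> zle i j \<Longrightarrow> zle i' j' \<Longrightarrow> zle i'' j'' \<Longrightarrow> zle i i' \<Longrightarrow> zle j j' \<Longrightarrow>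
   zle i' i'' \<Longrightarrow> zle j' j'' \<Longrightarrow> eta i' j' i'' j'' n (eta i j i' j' n x) = eta i j i'' j'' n x"
  using right_CE unfolding right_CE_def by (elim conjE) (simp only:)

lemma del_hom: "zle i j \<Longrightarrow> zle j k \<Longrightarrow> is_hom (H j k n) (H i j (n - 1)) (del i j k n)"
  using right_CE unfolding right_CE_def by (elim conjE) (simp only:)

lemma del_nat:
  "x \<in> carr (H j k n) \<Longrightarrow> zle i j \<Longrightarrow> zle j k \<Longrightarrow> zle i' j' \<Longrightarrow> zle j' k' \<Longrightarrow> zle i i' \<Longrightarrow>
   zle j j' \<Longrightarrow> zle k k' \<Longrightarrow> eta i j i' j' (n - 1) (del i j k n x) = del i' j' k' n (eta j k j' k' n x)"
  using right_CE unfolding right_CE_def by (elim conjE) (simp only:)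

lemma exact_at_Hik:
  "zle i j \<Longrightarrow> zle j k \<Longrightarrow>
   eta i j i k n ` carr (H i j n) = {y \<in> carr (H i k n). eta i k j k n y = mzero (H j k n)}"
  using right_CE unfolding right_CE_def by (elim conjE) (simp only:)

lemma exact_at_Hjk:
  "zle i j \<Longrightarrow> zle j k \<Longrightarrow>
   eta i k j k n ` carr (H i k n) = {y \<in> carr (H j k n). del i j k n y = mzero (H i j (n - 1))}"
  using right_CE unfolding right_CE_def by (elim conjE) (simp only:)

lemma exact_at_Hij:
  "zle i j \<Longrightarrow> zle j k \<Longrightarrow>
   del i j k n ` carr (H j k n) = {y \<in> carr (H i j (n - 1)). eta i j i k (n - 1) y = mzero (H i k (n - 1))}"
  using right_CE unfolding right_CE_def by (elim conjE) (simp only:)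

lemma eta_carr:
  "x \<in> carr (H i j n) \<Longrightarrow> zle i j \<Longrightarrow> zle i' j' \<Longrightarrow> zle i i' \<Longrightarrow> zle j j' \<Longrightarrow> eta i j i' j' n x \<in> carr (H i' j' n)"
  using hom_carr[OF eta_hom] by blast

lemma del_carr: "x \<in> carr (H j k n) \<Longrightarrow> zle i j \<Longrightarrow> zle j k \<Longrightarrow> del i j k n x \<in> carr (H i j (n - 1))"
  using hom_carr[OF del_hom] by blast

lemma eta_zero:
  "zle i j \<Longrightarrow> zle i' j' \<Longrightarrow> zle i i' \<Longrightarrow> zle j j' \<Longrightarrow> eta i j i' j' n (mzero (H i j n)) = mzero (H i' j' n)"
  using hom_zero[OF H_rmod H_rmod eta_hom] by blast

lemma del_zero: "zle i j \<Longrightarrow> zle j k \<Longrightarrow> del i j k n (mzero (H j k n)) = mzero (H i j (n - 1))"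
  using hom_zero[OF H_rmod H_rmod del_hom] by blast

lemma eta_add:
  "x \<in> carr (H i j n) \<Longrightarrow> y \<in> carr (H i j n) \<Longrightarrow> zle i j \<Longrightarrow> zle i' j' \<Longrightarrow> zle i i' \<Longrightarrow> zle j j' \<Longrightarrow>
   eta i j i' j' n (madd (H i j n) x y) = madd (H i' j' n) (eta i j i' j' n x) (eta i j i' j' n y)"
  using hom_add[OF eta_hom] by blast

lemma del_add:
  "x \<in> carr (H j k n) \<Longrightarrow> y \<in> carr (H j k n) \<Longrightarrow> zle i j \<Longrightarrow> zle j k \<Longrightarrow>
   del i j k n (madd (H j k n) x y) = madd (H i j (n - 1)) (del i j k n x) (del i j k n y)"
  using hom_add[OF del_hom] by blast

lemma eta_smul:
  "x \<in> carr (H i j n) \<Longrightarrow> zle i j \<Longrightarrow> zle i' j' \<Longrightarrow> zle i i' \<Longrightarrow> zle j j' \<Longrightarrow>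
   eta i j i' j' n (msmul (H i j n) r x) = msmul (H i' j' n) r (eta i j i' j' n x)"
  using hom_smul[OF eta_hom] by blast

lemma del_smul:
  "x \<in> carr (H j k n) \<Longrightarrow> zle i j \<Longrightarrow> zle j k \<Longrightarrow>
   del i j k n (msmul (H j k n) r x) = msmul (H i j (n - 1)) r (del i j k n x)"
  using hom_smul[OF del_hom] by blast

lemma eta_neg:
  "x \<in> carr (H i j n) \<Longrightarrow> zle i j \<Longrightarrow> zle i' j' \<Longrightarrow> zle i i' \<Longrightarrow> zle j j' \<Longrightarrow>
   eta i j i' j' n (mneg (H i j n) x) = mneg (H i' j' n) (eta i j i' j' n x)"
  using hom_neg[OF H_rmod H_rmod eta_hom] by blast

lemma del_neg:
  "x \<in> carr (H j k n) \<Longrightarrow> zle i j \<Longrightarrow> zle j k \<Longrightarrow>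
   del i j k n (mneg (H j k n) x) = mneg (H i j (n - 1)) (del i j k n x)"
  using hom_neg[OF H_rmod H_rmod del_hom] by blast

lemma H_inf_rmod: "is_rmod (H (Fin s) PInf n)"
  by (rule H_rmod) simp

lemma eta_inf_hom: "s \<le> u \<Longrightarrow> is_hom (H (Fin s) PInf n) (H (Fin u) PInf n) (eta (Fin s) PInf (Fin u) PInf n)"
  by (rule eta_hom) auto

lemma H_diag_trivial:
  assumes "x \<in> carr (H i i n)"
  shows "x = mzero (H i i n)"
proof -
  have "x \<in> eta i i i i n ` carr (H i i n)"
    using assms eta_id[OF assms] by (metis image_eqI zle_refl)
  then show ?thesis
    using exact_at_Hik[of i i i n] eta_id[OF assms] by auto
qed

section \<open>The right couple\<close>

lemma push_alpha:
  assumes x: "x \<in> carr (H (Fin s) PInf n)" and "s \<le> u"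
  shows "push (alcpl eta n) s u x = eta (Fin s) PInf (Fin u) PInf n x"
  using \<open>s \<le> u\<close>
proof (induction rule: int_ge_induct)
  case base
  then show ?case using eta_id[OF x] by simp
next
  case (step v)
  then show ?case
    using eta_comp[OF x, of "Fin v" PInf "Fin (v + 1)" PInf] eta_carr[OF x] by (simp add: push_step alcpl_def)
qed

lemma direct_system_A: "direct_system (Acpl H n) (alcpl eta n) UNIV"
  by unfold_locales (auto simp: Acpl_def alcpl_def intro: eta_carr)

text \<open>\<open>K\<^sub>\<infinity> im\<^sup>r A''\<^sub>s\<close> described inside the system: by exactness, \<open>im\<^sup>r A''\<^sub>s\<close> is the kernel of
  \<open>\<partial> : H(s,\<infinity>) \<rightarrow> H(s - r,s)\<close>, and \<open>x\<close> vanishes in \<open>colim A''\<close> iff it dies in some \<open>H(u,\<infinity>)\<close>.\<close>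
definition Kim :: "int \<Rightarrow> nat \<Rightarrow> int \<Rightarrow> 'a set" where
  "Kim n r s = {x \<in> carr (H (Fin s) PInf n).
      del (Fin (s - int r)) (Fin s) PInf n x = mzero (H (Fin (s - int r)) (Fin s) (n - 1))
    \<and> (\<exists>u\<ge>s. eta (Fin s) PInf (Fin u) PInf n x = mzero (H (Fin u) PInf n))}"

lemma eta_kills_mono:
  assumes "x \<in> carr (H (Fin s) PInf n)" "s \<le> u" "u \<le> u'"
    "eta (Fin s) PInf (Fin u) PInf n x = mzero (H (Fin u) PInf n)"
  shows "eta (Fin s) PInf (Fin u') PInf n x = mzero (H (Fin u') PInf n)"
  using eta_comp[OF assms(1), of "Fin u" PInf "Fin u'" PInf] eta_zero[of "Fin u" PInf "Fin u'" PInf n] assms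
  by simp

lemma iota_eq_zero_iff:
  assumes x: "x \<in> carr (H (Fin s) PInf n)"
  shows "iota (Acpl H n) (alcpl eta n) s x = mzero (colim (Acpl H n) (alcpl eta n) UNIV) \<longleftrightarrow>
    (\<exists>u\<ge>s. eta (Fin s) PInf (Fin u) PInf n x = mzero (H (Fin u) PInf n))"
proof -
  interpret A: direct_system "Acpl H n" "alcpl eta n" UNIV
    by (rule direct_system_A)
  show ?thesis
    unfolding iota_def
    using A.cls_eq_zero_iff[of s x] x push_alpha[OF x]
    by (auto simp: Acpl_def alcpl_def eta_zero rmod_zero_carr[OF H_rmod])
qed

lemma imr_eq_image_eta:
  "imr (Acpl H n) (alcpl eta n) r s = eta (Fin (s - int r)) PInf (Fin s) PInf n ` carr (H (Fin (s - int r)) PInf n)"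
proof -
  have "iter (alcpl eta n) (s - int r) r y = eta (Fin (s - int r)) PInf (Fin s) PInf n y"
    if "y \<in> carr (H (Fin (s - int r)) PInf n)" for y
    using push_alpha[OF that, of s] by (simp add: push_def)
  then show ?thesis
    unfolding imr_def Acpl_def by (auto simp: image_def)
qed

lemma Kinf_imr_eq_Kim: "Kinf_imr (Acpl H n) (alcpl eta n) r s = Kim n r s"
  unfolding Kinf_imr_def Kim_def imr_eq_image_eta exact_at_Hjk[of "Fin (s - int r)" "Fin s" PInf n, simplified]
  using iota_eq_zero_iff by (auto simp: Acpl_def)

lemma Kim_carr: "x \<in> Kim n r s \<Longrightarrow> x \<in> carr (H (Fin s) PInf n)"
  by (simp add: Kim_def)

lemma Kim_zero: "mzero (H (Fin s) PInf n) \<in> Kim n r s"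
  unfolding Kim_def using rmod_zero_carr[OF H_rmod] del_zero eta_zero by auto

lemma Kim_add:
  assumes "x \<in> Kim n r s" "y \<in> Kim n r s"
  shows "madd (H (Fin s) PInf n) x y \<in> Kim n r s"
proof -
  have c: "x \<in> carr (H (Fin s) PInf n)" "y \<in> carr (H (Fin s) PInf n)"
    using assms Kim_carr by auto
  obtain u1 u2 where u: "s \<le> u1" "eta (Fin s) PInf (Fin u1) PInf n x = mzero (H (Fin u1) PInf n)"
    "s \<le> u2" "eta (Fin s) PInf (Fin u2) PInf n y = mzero (H (Fin u2) PInf n)"
    using assms unfolding Kim_def by auto
  let ?u = "max u1 u2"
  have "eta (Fin s) PInf (Fin ?u) PInf n x = mzero (H (Fin ?u) PInf n)"
       "eta (Fin s) PInf (Fin ?u) PInf n y = mzero (H (Fin ?u) PInf n)"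
    using eta_kills_mono[OF c(1) u(1) _ u(2)] eta_kills_mono[OF c(2) u(3) _ u(4)] by auto
  then show ?thesis
    using assms c u unfolding Kim_def
    by (auto simp: del_add eta_add rmod_add_carr[OF H_rmod] rmod_zero_add[OF H_rmod] rmod_zero_carr[OF H_rmod]
        intro!: exI[of _ ?u])
qed

lemma Kim_neg: "x \<in> Kim n r s \<Longrightarrow> mneg (H (Fin s) PInf n) x \<in> Kim n r s"
  unfolding Kim_def by (auto simp: del_neg eta_neg rmod_neg_carr[OF H_rmod] rmod_neg_zero[OF H_rmod])

lemma Kim_smul: "x \<in> Kim n r s \<Longrightarrow> msmul (H (Fin s) PInf n) c x \<in> Kim n r s"
  unfolding Kim_def by (auto simp: del_smul eta_smul rmod_smul_carr[OF H_rmod] rmod_smul_zero[OF H_rmod])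

lemma Kim_SucD:
  assumes "x \<in> Kim n (Suc r) s"
  shows "x \<in> Kim n r s"
proof -
  have c: "x \<in> carr (H (Fin s) PInf n)" using assms Kim_carr by auto
  have "del (Fin (s - int r)) (Fin s) PInf n x
      = eta (Fin (s - int (Suc r))) (Fin s) (Fin (s - int r)) (Fin s) (n - 1) (del (Fin (s - int (Suc r))) (Fin s) PInf n x)"
    using del_nat[OF c, of "Fin (s - int (Suc r))" "Fin (s - int r)" "Fin s" PInf] eta_id[OF c] by simp
  then show ?thesis
    using assms eta_zero unfolding Kim_def by auto
qed

lemma Kim_alpha:
  assumes "x \<in> Kim n r (s - 1)"
  shows "eta (Fin (s - 1)) PInf (Fin s) PInf n x \<in> Kim n r s"
proof -
  have c: "x \<in> carr (H (Fin (s - 1)) PInf n)" using assms Kim_carr by auto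
  obtain u where u: "s - 1 \<le> u" "eta (Fin (s - 1)) PInf (Fin u) PInf n x = mzero (H (Fin u) PInf n)"
    using assms unfolding Kim_def by auto
  let ?u = "max u s"
  have "eta (Fin s) PInf (Fin ?u) PInf n (eta (Fin (s - 1)) PInf (Fin s) PInf n x) = mzero (H (Fin ?u) PInf n)"
    using eta_kills_mono[OF c u(1) _ u(2), of ?u] eta_comp[OF c, of "Fin s" PInf "Fin ?u" PInf] by simp
  moreover have "del (Fin (s - int r)) (Fin s) PInf n (eta (Fin (s - 1)) PInf (Fin s) PInf n x) =
     eta (Fin (s - 1 - int r)) (Fin (s - 1)) (Fin (s - int r)) (Fin s) (n - 1) (del (Fin (s - 1 - int r)) (Fin (s - 1)) PInf n x)"
    using del_nat[OF c, of "Fin (s - 1 - int r)" "Fin (s - int r)" "Fin s" PInf] by simp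
  ultimately show ?thesis
    using assms eta_zero eta_carr[OF c, of "Fin s" PInf] unfolding Kim_def by (auto intro!: exI[of _ ?u])
qed

lemma Kim_eta:
  assumes x: "x \<in> Kim n r s" and "s \<le> u"
  shows "eta (Fin s) PInf (Fin u) PInf n x \<in> Kim n r u"
  using assms(2)
proof (induction rule: int_ge_induct)
  case base
  then show ?case using x eta_id Kim_carr by simp
next
  case (step v)
  have "eta (Fin v) PInf (Fin (v + 1)) PInf n (eta (Fin s) PInf (Fin v) PInf n x) \<in> Kim n r (v + 1)"
    using Kim_alpha[of "eta (Fin s) PInf (Fin v) PInf n x" n r "v + 1"] step by simp
  then show ?case using eta_comp[OF Kim_carr[OF x], of "Fin v" PInf "Fin (v + 1)" PInf] step by simp
qed

lemma Kim_mono: "x \<in> Kim n r s \<Longrightarrow> r' \<le> r \<Longrightarrow> x \<in> Kim n r' s"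
  by (induction r) (auto simp: le_Suc_eq dest: Kim_SucD)

definition Kseq :: "int \<Rightarrow> int \<Rightarrow> (nat \<Rightarrow> 'a) set" where
  "Kseq n s = {a. \<forall>r. a r \<in> Kim n r s}"

lemma Kseq_carr: "a \<in> Kseq n s \<Longrightarrow> a r \<in> carr (H (Fin s) PInf n)"
  by (simp add: Kseq_def Kim_def)

lemma Kseq_add: "a \<in> Kseq n s \<Longrightarrow> b \<in> Kseq n s \<Longrightarrow> (\<lambda>r. madd (H (Fin s) PInf n) (a r) (b r)) \<in> Kseq n s"
  by (simp add: Kseq_def Kim_add)

lemma Kseq_smul: "a \<in> Kseq n s \<Longrightarrow> (\<lambda>r. msmul (H (Fin s) PInf n) c (a r)) \<in> Kseq n s"
  by (simp add: Kseq_def Kim_smul)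

lemma Kseq_neg: "a \<in> Kseq n s \<Longrightarrow> (\<lambda>r. mneg (H (Fin s) PInf n) (a r)) \<in> Kseq n s"
  by (simp add: Kseq_def Kim_neg)

lemma Kseq_eta: "a \<in> Kseq n s \<Longrightarrow> s \<le> u \<Longrightarrow> (\<lambda>r. eta (Fin s) PInf (Fin u) PInf n (a r)) \<in> Kseq n u"
  by (simp add: Kseq_def Kim_eta)

lemma msum_Kim: "a \<in> Kseq n s \<Longrightarrow> msum (H (Fin s) PInf n) a k \<in> Kim n 0 s"
proof (induction k)
  case (Suc k)
  have "a k \<in> Kim n 0 s" using Suc(2) Kim_mono[of "a k" n k s 0] by (simp add: Kseq_def)
  then show ?case using Suc Kim_add by simp
qed (simp add: Kim_zero)

lemma del_eta_Kim_zero: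
  assumes x: "x \<in> Kim n r s" and "s \<le> u" "s - int r \<le> i" "i \<le> u"
  shows "del (Fin i) (Fin u) PInf n (eta (Fin s) PInf (Fin u) PInf n x) = mzero (H (Fin i) (Fin u) (n - 1))"
proof -
  have c: "x \<in> carr (H (Fin s) PInf n)" using x Kim_carr by simp
  have "del (Fin (min i s)) (Fin s) PInf n x
      = eta (Fin (s - int r)) (Fin s) (Fin (min i s)) (Fin s) (n - 1) (del (Fin (s - int r)) (Fin s) PInf n x)"
    using del_nat[OF c, of "Fin (s - int r)" "Fin (min i s)" "Fin s" PInf] eta_id[OF c] assms by simp
  also have "\<dots> = mzero (H (Fin (min i s)) (Fin s) (n - 1))"
    using x eta_zero assms by (simp add: Kim_def)
  finally have "del (Fin (min i s)) (Fin s) PInf n x = mzero (H (Fin (min i s)) (Fin s) (n - 1))" .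
  moreover have "del (Fin i) (Fin u) PInf n (eta (Fin s) PInf (Fin u) PInf n x)
      = eta (Fin (min i s)) (Fin s) (Fin i) (Fin u) (n - 1) (del (Fin (min i s)) (Fin s) PInf n x)"
    using del_nat[OF c, of "Fin (min i s)" "Fin i" "Fin u" PInf] assms by simp
  ultimately show ?thesis using eta_zero assms by simp
qed

lemma del_Kim_zero:
  assumes x: "x \<in> Kim n r s" and "s - int r \<le> i" "i \<le> s"
  shows "del (Fin i) (Fin s) PInf n x = mzero (H (Fin i) (Fin s) (n - 1))"
  using del_eta_Kim_zero[OF x order_refl assms(2,3)] eta_id Kim_carr[OF x] by simp

definition Kim_tower :: "int \<Rightarrow> int \<Rightarrow> nat \<Rightarrow> ('r, 'a) rmod" where
  "Kim_tower n s r = (H (Fin s) PInf n)\<lparr>carr := Kim n r s\<rparr>"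

lemma Ktower_eq_Kim_tower: "Ktower (Acpl H n) (alcpl eta n) s = Kim_tower n s"
  by (rule ext) (simp add: Ktower_def Kim_tower_def Kinf_imr_eq_Kim Acpl_def)

lemma tower_Kim: "tower (Kim_tower n s) (\<lambda>r x. x)"
proof
  show "is_rmod (Kim_tower n s r)" for r
    unfolding Kim_tower_def
    by (rule rmod_submodule) (auto simp: H_rmod Kim_carr Kim_zero Kim_add Kim_neg Kim_smul)
  show "is_hom (Kim_tower n s (Suc r)) (Kim_tower n s r) (\<lambda>x. x)" for r
    by (auto simp: is_hom_def Kim_tower_def Kim_SucD)
qed

lemma Seq_Kim_tower: "tower.Seq (Kim_tower n s) = Kseq n s"
  by (simp add: tower.Seq_def[OF tower_Kim] Kseq_def Kim_tower_def)

section \<open>Limits, colimits and the interchange morphism\<close>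

text \<open>\<open>limH_push m j u x\<close> is the image of \<open>x \<in> lim\<^sub>i H(i,j)\<close> in \<open>lim\<^sub>i H(i,u)\<close>; for \<open>i > j\<close> the
  component \<open>x j \<in> H(j,j) = 0\<close> is used.\<close>
definition limH_push :: "int \<Rightarrow> int \<Rightarrow> int \<Rightarrow> (int \<Rightarrow> 'a) \<Rightarrow> int \<Rightarrow> 'a" where
  "limH_push m j u x = (\<lambda>i. if i \<le> u then eta (Fin (min i j)) (Fin j) (Fin i) (Fin u) m (x (min i j)) else undefined)"

lemma carr_LimH_iff:
  "x \<in> carr (LimH H eta m j) \<longleftrightarrow> (\<forall>i\<le>j. x i \<in> carr (H (Fin i) (Fin j) m))
   \<and> (\<forall>i\<le>j. eta (Fin (i - 1)) (Fin j) (Fin i) (Fin j) m (x (i - 1)) = x i) \<and> (\<forall>i. \<not> i \<le> j \<longrightarrow> x i = undefined)"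
  by (auto simp: LimH_def ilim_def)

lemma limH_push_compat:
  assumes x: "x \<in> carr (LimH H eta m j)" and "j \<le> u" "i \<le> u"
  shows "eta (Fin (i - 1)) (Fin u) (Fin i) (Fin u) m (limH_push m j u x (i - 1)) = limH_push m j u x i"
proof (cases "i \<le> j")
  case True
  have x1: "x (i - 1) \<in> carr (H (Fin (i - 1)) (Fin j) m)"
    using x True by (simp add: carr_LimH_iff)
  have "eta (Fin (i - 1)) (Fin u) (Fin i) (Fin u) m (limH_push m j u x (i - 1))
      = eta (Fin (i - 1)) (Fin j) (Fin i) (Fin u) m (x (i - 1))"
    using True assms eta_comp[OF x1, of "Fin (i - 1)" "Fin u" "Fin i" "Fin u"] by (simp add: limH_push_def)
  also have "\<dots> = eta (Fin i) (Fin j) (Fin i) (Fin u) m (eta (Fin (i - 1)) (Fin j) (Fin i) (Fin j) m (x (i - 1)))"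
    using True assms eta_comp[OF x1, of "Fin i" "Fin j" "Fin i" "Fin u"] by simp
  also have "\<dots> = limH_push m j u x i"
    using True assms x by (simp add: carr_LimH_iff limH_push_def)
  finally show ?thesis .
next
  case False
  have "x j \<in> carr (H (Fin j) (Fin j) m)"
    using x by (simp add: carr_LimH_iff)
  moreover have "min (i - 1) j = j" "min i j = j"
    using False by auto
  ultimately show ?thesis
    using False assms eta_comp[of "x j" "Fin j" "Fin j" m "Fin (i - 1)" "Fin u" "Fin i" "Fin u"]
    by (simp add: limH_push_def)
qed

lemma limH_push_carr:
  assumes x: "x \<in> carr (LimH H eta m j)" and "j \<le> u"
  shows "limH_push m j u x \<in> carr (LimH H eta m u)"
proof -
  have "limH_push m j u x i \<in> carr (H (Fin i) (Fin u) m)" if "i \<le> u" for i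
    using that \<open>j \<le> u\<close> x by (auto simp: limH_push_def carr_LimH_iff intro!: eta_carr)
  then show ?thesis
    unfolding carr_LimH_iff using limH_push_compat[OF assms] by (simp add: limH_push_def)
qed

lemma limH_push_self: "x \<in> carr (LimH H eta m j) \<Longrightarrow> limH_push m j j x = x"
  by (auto simp: limH_push_def carr_LimH_iff eta_id fun_eq_iff)

lemma limH_push_trans:
  assumes x: "x \<in> carr (LimH H eta m j)" and "j \<le> v" "v \<le> u"
  shows "limH_push m v u (limH_push m j v x) = limH_push m j u x"
proof (rule ext)
  fix i
  have "x (min i j) \<in> carr (H (Fin (min i j)) (Fin j) m)"
    using x by (simp add: carr_LimH_iff)
  moreover have "min (min i v) j = min i j"
    using assms by auto
  ultimately show "limH_push m v u (limH_push m j v x) i = limH_push m j u x i"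
    using assms eta_comp[of "x (min i j)" "Fin (min i j)" "Fin j" m "Fin (min i v)" "Fin v" "Fin i" "Fin u"]
    by (auto simp: limH_push_def)
qed

lemma LimH_tr_eq_limH_push: "LimH_tr eta m k x = limH_push m (k - 1) k x"
  by (simp add: LimH_tr_def limH_push_def)

lemma direct_system_LimH: "direct_system (LimH H eta m) (LimH_tr eta m) UNIV"
  by unfold_locales (auto simp: LimH_tr_eq_limH_push intro!: limH_push_carr)

lemma push_LimH_tr:
  assumes x: "x \<in> carr (LimH H eta m j)" and "j \<le> u"
  shows "push (LimH_tr eta m) j u x = limH_push m j u x"
  using \<open>j \<le> u\<close>
proof (induction rule: int_ge_induct)
  case base
  then show ?case using limH_push_self[OF x] by simp
next
  case (step v)
  then show ?case
    using limH_push_trans[OF x step(1), of "v + 1"] by (simp add: push_step LimH_tr_eq_limH_push)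
qed

lemma limH_push_add:
  assumes x: "x \<in> carr (LimH H eta m j)" and y: "y \<in> carr (LimH H eta m j)" and "j \<le> u"
  shows "limH_push m j u (madd (LimH H eta m j) x y) = madd (LimH H eta m u) (limH_push m j u x) (limH_push m j u y)"
proof (rule ext)
  fix i
  have "x (min i j) \<in> carr (H (Fin (min i j)) (Fin j) m)" "y (min i j) \<in> carr (H (Fin (min i j)) (Fin j) m)"
    using x y by (auto simp: carr_LimH_iff)
  then show "limH_push m j u (madd (LimH H eta m j) x y) i = madd (LimH H eta m u) (limH_push m j u x) (limH_push m j u y) i"
    using \<open>j \<le> u\<close> by (auto simp: limH_push_def LimH_def ilim_def eta_add)
qed

lemma limH_push_smul:
  assumes x: "x \<in> carr (LimH H eta m j)" and "j \<le> u"
  shows "limH_push m j u (msmul (LimH H eta m j) r x) = msmul (LimH H eta m u) r (limH_push m j u x)"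
proof (rule ext)
  fix i
  have "x (min i j) \<in> carr (H (Fin (min i j)) (Fin j) m)"
    using x by (auto simp: carr_LimH_iff)
  then show "limH_push m j u (msmul (LimH H eta m j) r x) i = msmul (LimH H eta m u) r (limH_push m j u x) i"
    using \<open>j \<le> u\<close> by (auto simp: limH_push_def LimH_def ilim_def eta_smul)
qed

lemma LimH_add_carr:
  "x \<in> carr (LimH H eta m j) \<Longrightarrow> y \<in> carr (LimH H eta m j) \<Longrightarrow> madd (LimH H eta m j) x y \<in> carr (LimH H eta m j)"
  unfolding carr_LimH_iff by (auto simp: LimH_def ilim_def eta_add rmod_add_carr[OF H_rmod])

lemma LimH_smul_carr: "x \<in> carr (LimH H eta m j) \<Longrightarrow> msmul (LimH H eta m j) r x \<in> carr (LimH H eta m j)"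
  unfolding carr_LimH_iff by (auto simp: LimH_def ilim_def eta_smul rmod_smul_carr[OF H_rmod])

abbreviation "clsCL m \<equiv> colim_cls (LimH H eta m) (LimH_tr eta m) UNIV"

lemma ColimLim_cls_add:
  assumes "x \<in> carr (LimH H eta m j)" "y \<in> carr (LimH H eta m k)" "j \<le> u" "k \<le> u"
  shows "madd (ColimLim H eta m) (clsCL m (j, x)) (clsCL m (k, y))
    = clsCL m (u, madd (LimH H eta m u) (limH_push m j u x) (limH_push m k u y))"
proof -
  interpret CL: direct_system "LimH H eta m" "LimH_tr eta m" UNIV
    by (rule direct_system_LimH)
  show ?thesis
    unfolding ColimLim_def
    using CL.cls_add[of j k x y u] assms push_LimH_tr LimH_tr_eq_limH_push limH_push_add LimH_add_carr by auto
qed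

lemma ColimLim_cls_smul:
  assumes "x \<in> carr (LimH H eta m j)"
  shows "msmul (ColimLim H eta m) r (clsCL m (j, x)) = clsCL m (j, msmul (LimH H eta m j) r x)"
proof -
  interpret CL: direct_system "LimH H eta m" "LimH_tr eta m" UNIV
    by (rule direct_system_LimH)
  show ?thesis
    unfolding ColimLim_def
    using CL.cls_smul[of r j x] assms LimH_tr_eq_limH_push limH_push_smul LimH_smul_carr by auto
qed

lemma ColimLim_cls_eq_iff:
  assumes "x \<in> carr (LimH H eta m j)" "y \<in> carr (LimH H eta m k)"
  shows "clsCL m (j, x) = clsCL m (k, y) \<longleftrightarrow> (\<exists>u. j \<le> u \<and> k \<le> u \<and> limH_push m j u x = limH_push m k u y)"
proof -
  interpret CL: direct_system "LimH H eta m" "LimH_tr eta m" UNIV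
    by (rule direct_system_LimH)
  show ?thesis
    using CL.cls_eq_iff[of j k x y] assms push_LimH_tr by auto
qed

lemma direct_system_ColimH:
  "direct_system (\<lambda>p. H (Fin i) (Fin p) m) (\<lambda>p. eta (Fin i) (Fin (p - 1)) (Fin i) (Fin p) m) {i..}"
  by unfold_locales (auto intro!: eta_carr)

lemma push_ColimH_tr:
  assumes x: "x \<in> carr (H (Fin i) (Fin p) m)" and "i \<le> p" "p \<le> u"
  shows "push (\<lambda>p. eta (Fin i) (Fin (p - 1)) (Fin i) (Fin p) m) p u x = eta (Fin i) (Fin p) (Fin i) (Fin u) m x"
  using \<open>p \<le> u\<close>
proof (induction rule: int_ge_induct)
  case base
  then show ?case using eta_id[OF x] assms by simp
next
  case (step v)
  then show ?case
    using eta_comp[OF x, of "Fin i" "Fin v" "Fin i" "Fin (v + 1)"] assms by (simp add: push_step)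
qed

lemma ColimH_cls_eq_iff:
  assumes x: "x \<in> carr (H (Fin i) (Fin p) m)" "y \<in> carr (H (Fin i) (Fin q) m)" "i \<le> p" "i \<le> q"
  shows "ColimH_cls H eta m i (p, x) = ColimH_cls H eta m i (q, y) \<longleftrightarrow>
    (\<exists>u. p \<le> u \<and> q \<le> u \<and> eta (Fin i) (Fin p) (Fin i) (Fin u) m x = eta (Fin i) (Fin q) (Fin i) (Fin u) m y)"
proof -
  interpret C: direct_system "\<lambda>p. H (Fin i) (Fin p) m" "\<lambda>p. eta (Fin i) (Fin (p - 1)) (Fin i) (Fin p) m" "{i..}"
    by (rule direct_system_ColimH)
  show ?thesis
    unfolding ColimH_cls_def using C.cls_eq_iff[of p q x y] assms push_ColimH_tr by auto
qed

lemma ColimH_cls_eq_zero_iff: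
  assumes x: "x \<in> carr (H (Fin i) (Fin p) m)" and "i \<le> p"
  shows "ColimH_cls H eta m i (p, x) = mzero (ColimH H eta m i) \<longleftrightarrow>
     (\<exists>u\<ge>p. eta (Fin i) (Fin p) (Fin i) (Fin u) m x = mzero (H (Fin i) (Fin u) m))"
proof -
  interpret C: direct_system "\<lambda>p. H (Fin i) (Fin p) m" "\<lambda>p. eta (Fin i) (Fin (p - 1)) (Fin i) (Fin p) m" "{i..}"
    by (rule direct_system_ColimH)
  show ?thesis
    unfolding ColimH_def ColimH_cls_def using C.cls_eq_zero_iff[of p x] assms push_ColimH_tr[OF x \<open>i \<le> p\<close>]
    by (auto simp: eta_zero rmod_zero_carr[OF H_rmod])
qed

definition kappa_fam :: "int \<Rightarrow> int \<Rightarrow> (int \<Rightarrow> 'a) \<Rightarrow> int \<Rightarrow> (int \<times> 'a) set" where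
  "kappa_fam m j x = (\<lambda>i. ColimH_cls H eta m i (max i j, eta (Fin (min i j)) (Fin j) (Fin i) (Fin (max i j)) m (x (min i j))))"

lemma kappa_fam_push:
  assumes x: "x \<in> carr (LimH H eta m j)" and "j \<le> u"
  shows "kappa_fam m u (limH_push m j u x) = kappa_fam m j x"
proof (rule ext)
  fix i
  have xc: "x (min i j) \<in> carr (H (Fin (min i j)) (Fin j) m)"
    using x by (simp add: carr_LimH_iff)
  have c: "eta (Fin (min i j)) (Fin j) (Fin i) (Fin (max i j)) m (x (min i j)) \<in> carr (H (Fin i) (Fin (max i j)) m)"
    "eta (Fin (min i j)) (Fin j) (Fin i) (Fin (max i u)) m (x (min i j)) \<in> carr (H (Fin i) (Fin (max i u)) m)"
    using xc \<open>j \<le> u\<close> by (auto intro!: eta_carr)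
  have "limH_push m j u x (min i u) = eta (Fin (min i j)) (Fin j) (Fin (min i u)) (Fin u) m (x (min i j))"
    using \<open>j \<le> u\<close> by (simp add: limH_push_def min_def)
  then show "kappa_fam m u (limH_push m j u x) i = kappa_fam m j x i"
    unfolding kappa_fam_def
    using ColimH_cls_eq_iff[OF c(2) c(1)] \<open>j \<le> u\<close> xc
      eta_comp[OF xc, of "Fin (min i u)" "Fin u" "Fin i" "Fin (max i u)"]
      eta_comp[OF xc, of "Fin i" "Fin (max i u)" "Fin i" "Fin (max i u)"]
      eta_comp[OF xc, of "Fin i" "Fin (max i j)" "Fin i" "Fin (max i u)"]
    by (auto intro!: exI[of _ "max i u"])
qed

lemma kappa_cls:
  assumes x: "x \<in> carr (LimH H eta m j)"
  shows "kappa H eta m (clsCL m (j, x)) = kappa_fam m j x"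
proof -
  interpret CL: direct_system "LimH H eta m" "LimH_tr eta m" UNIV
    by (rule direct_system_LimH)
  obtain j' x' where r: "rep (clsCL m (j, x)) = (j', x')"
    by (metis prod.exhaust)
  note R = CL.rep_cls[OF UNIV_I x r]
  obtain u where u: "j \<le> u" "j' \<le> u" "limH_push m j u x = limH_push m j' u x'"
    using R ColimLim_cls_eq_iff[OF x R(2)] by auto
  have "kappa_fam m j' x' = kappa_fam m j x"
    using kappa_fam_push[OF x u(1)] kappa_fam_push[OF R(2) u(2)] u(3) by simp
  then show ?thesis
    using r by (simp add: kappa_def kappa_fam_def[symmetric])
qed

lemma kappa_fam_eq_zero_iff:
  assumes x: "x \<in> carr (LimH H eta m j)"
  shows "kappa_fam m j x i = mzero (ColimH H eta m i) \<longleftrightarrow>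
     (\<exists>u\<ge>max i j. eta (Fin (min i j)) (Fin j) (Fin i) (Fin u) m (x (min i j)) = mzero (H (Fin i) (Fin u) m))"
proof -
  have xc: "x (min i j) \<in> carr (H (Fin (min i j)) (Fin j) m)"
    using x by (simp add: carr_LimH_iff)
  have c: "eta (Fin (min i j)) (Fin j) (Fin i) (Fin (max i j)) m (x (min i j)) \<in> carr (H (Fin i) (Fin (max i j)) m)"
    using xc by (auto intro!: eta_carr)
  have "eta (Fin i) (Fin (max i j)) (Fin i) (Fin u) m (eta (Fin (min i j)) (Fin j) (Fin i) (Fin (max i j)) m (x (min i j)))
     = eta (Fin (min i j)) (Fin j) (Fin i) (Fin u) m (x (min i j))" if "max i j \<le> u" for u
    using eta_comp[OF xc, of "Fin i" "Fin (max i j)" "Fin i" "Fin u"] that by auto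
  then show ?thesis
    unfolding kappa_fam_def using ColimH_cls_eq_zero_iff[OF c] by auto
qed

text \<open>For \<open>i > j\<close> the component of \<open>\<kappa>\<close> factors through \<open>H(j,j) = 0\<close>, so only \<open>i \<le> j\<close> matters.\<close>
lemma ker_kappa_cls_iff:
  assumes x: "x \<in> carr (LimH H eta m j)"
  shows "clsCL m (j, x) \<in> carr (ker_kappa H eta m) \<longleftrightarrow>
     (\<forall>i\<le>j. \<exists>u\<ge>j. eta (Fin i) (Fin j) (Fin i) (Fin u) m (x i) = mzero (H (Fin i) (Fin u) m))"
proof -
  interpret CL: direct_system "LimH H eta m" "LimH_tr eta m" UNIV
    by (rule direct_system_LimH)
  have "x j = mzero (H (Fin j) (Fin j) m)"
    using H_diag_trivial x by (simp add: carr_LimH_iff)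
  then have "(\<forall>i. \<exists>u\<ge>max i j. eta (Fin (min i j)) (Fin j) (Fin i) (Fin u) m (x (min i j)) = mzero (H (Fin i) (Fin u) m))
      \<longleftrightarrow> (\<forall>i\<le>j. \<exists>u\<ge>j. eta (Fin i) (Fin j) (Fin i) (Fin u) m (x i) = mzero (H (Fin i) (Fin u) m))"
    using eta_zero[of "Fin j" "Fin j" _ _ m]
    by (metis (no_types, lifting) linorder_le_cases max.absorb1 max.absorb2 min.absorb1 min.absorb2 order_refl zle.simps(1))
  moreover have "mzero (LimColim H eta m) = (\<lambda>i. mzero (ColimH H eta m i))"
    by (simp add: LimColim_def ilim_def)
  ultimately show ?thesis
    using CL.cls_in_carr[of j x] x kappa_cls[OF x] kappa_fam_eq_zero_iff[OF x]
    by (simp add: ker_kappa_def kerm_def ColimLim_def fun_eq_iff)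
qed

section \<open>The whole-plane obstruction group of the right couple\<close>

abbreviation "lclsK n s \<equiv> lim1_cls (Kim_tower n s) (\<lambda>r x. x)"

definition Wcls :: "int \<Rightarrow> int \<Rightarrow> (nat \<Rightarrow> 'a) \<Rightarrow> (int \<times> (nat \<Rightarrow> 'a) set) set" where
  "Wcls n s a = colim_cls (RlimK (Acpl H n) (alcpl eta n)) (RlimK_tr (Acpl H n) (alcpl eta n)) UNIV (s, lclsK n s a)"

lemma Kim_tower_simps [simp]:
  "madd (Kim_tower n s r) = madd (H (Fin s) PInf n)" "mneg (Kim_tower n s r) = mneg (H (Fin s) PInf n)"
  "msmul (Kim_tower n s r) = msmul (H (Fin s) PInf n)" "mzero (Kim_tower n s r) = mzero (H (Fin s) PInf n)"
  "carr (Kim_tower n s r) = Kim n r s"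
  by (simp_all add: Kim_tower_def)

lemma RlimK_eq: "RlimK (Acpl H n) (alcpl eta n) s = lim1 (Kim_tower n s) (\<lambda>r x. x)"
  by (simp add: RlimK_def Ktower_eq_Kim_tower)

lemma alpha_hom_Kim_tower: "is_hom (Kim_tower n (k - 1) r) (Kim_tower n k r) (alcpl eta n k)"
  unfolding is_hom_def Kim_tower_simps alcpl_def
  by (auto intro: Kim_alpha eta_add eta_smul dest: Kim_carr)

lemma carr_RlimK_iff: "c \<in> carr (RlimK (Acpl H n) (alcpl eta n) s) \<longleftrightarrow> (\<exists>a\<in>Kseq n s. c = lclsK n s a)"
  unfolding RlimK_eq tower.carr_lim1[OF tower_Kim] Seq_Kim_tower ..

lemma lclsK_carr: "a \<in> Kseq n s \<Longrightarrow> lclsK n s a \<in> carr (RlimK (Acpl H n) (alcpl eta n) s)"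
  by (auto simp: carr_RlimK_iff)

lemma lclsK_add:
  "a \<in> Kseq n s \<Longrightarrow> b \<in> Kseq n s \<Longrightarrow>
   madd (RlimK (Acpl H n) (alcpl eta n) s) (lclsK n s a) (lclsK n s b) = lclsK n s (\<lambda>r. madd (H (Fin s) PInf n) (a r) (b r))"
  using tower.lcls_add[OF tower_Kim] Seq_Kim_tower RlimK_eq by simp

lemma lclsK_smul:
  "a \<in> Kseq n s \<Longrightarrow>
   msmul (RlimK (Acpl H n) (alcpl eta n) s) c (lclsK n s a) = lclsK n s (\<lambda>r. msmul (H (Fin s) PInf n) c (a r))"
  using tower.lcls_smul[OF tower_Kim] Seq_Kim_tower RlimK_eq by simp

lemma RlimK_tr_lclsK:
  assumes a: "a \<in> Kseq n (k - 1)"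
  shows "RlimK_tr (Acpl H n) (alcpl eta n) k (lclsK n (k - 1) a) = lclsK n k (\<lambda>r. eta (Fin (k - 1)) PInf (Fin k) PInf n (a r))"
proof -
  have "lclsK n k (\<lambda>r. alcpl eta n k (rep (lclsK n (k - 1) a) r)) = lclsK n k (\<lambda>r. alcpl eta n k (a r))"
    by (rule lim1_cls_map[OF tower_Kim tower_Kim alpha_hom_Kim_tower]) (use a Seq_Kim_tower in auto)
  then show ?thesis unfolding RlimK_tr_def Ktower_eq_Kim_tower by (simp add: alcpl_def)
qed

lemma RlimK_tr_add:
  assumes "c \<in> carr (RlimK (Acpl H n) (alcpl eta n) (k - 1))" "d \<in> carr (RlimK (Acpl H n) (alcpl eta n) (k - 1))"
  shows "RlimK_tr (Acpl H n) (alcpl eta n) k (madd (RlimK (Acpl H n) (alcpl eta n) (k - 1)) c d)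
    = madd (RlimK (Acpl H n) (alcpl eta n) k) (RlimK_tr (Acpl H n) (alcpl eta n) k c) (RlimK_tr (Acpl H n) (alcpl eta n) k d)"
proof -
  obtain x y where xy: "x \<in> Kseq n (k - 1)" "c = lclsK n (k - 1) x" "y \<in> Kseq n (k - 1)" "d = lclsK n (k - 1) y"
    using assms carr_RlimK_iff by meson
  have "(\<lambda>r. eta (Fin (k - 1)) PInf (Fin k) PInf n (madd (H (Fin (k - 1)) PInf n) (x r) (y r)))
      = (\<lambda>r. madd (H (Fin k) PInf n) (eta (Fin (k - 1)) PInf (Fin k) PInf n (x r)) (eta (Fin (k - 1)) PInf (Fin k) PInf n (y r)))"
    using xy Kseq_carr by (simp add: eta_add)
  then show ?thesis
    using xy lclsK_add RlimK_tr_lclsK Kseq_add Kseq_eta[of _ n "k - 1" k] by simp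
qed

lemma RlimK_tr_smul:
  assumes "c \<in> carr (RlimK (Acpl H n) (alcpl eta n) (k - 1))"
  shows "RlimK_tr (Acpl H n) (alcpl eta n) k (msmul (RlimK (Acpl H n) (alcpl eta n) (k - 1)) r c)
    = msmul (RlimK (Acpl H n) (alcpl eta n) k) r (RlimK_tr (Acpl H n) (alcpl eta n) k c)"
proof -
  obtain x where x: "x \<in> Kseq n (k - 1)" "c = lclsK n (k - 1) x"
    using assms carr_RlimK_iff by meson
  have "(\<lambda>q. eta (Fin (k - 1)) PInf (Fin k) PInf n (msmul (H (Fin (k - 1)) PInf n) r (x q)))
      = (\<lambda>q. msmul (H (Fin k) PInf n) r (eta (Fin (k - 1)) PInf (Fin k) PInf n (x q)))"
    using x Kseq_carr by (simp add: eta_smul)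
  then show ?thesis
    using x lclsK_smul RlimK_tr_lclsK Kseq_smul Kseq_eta[of _ n "k - 1" k] by simp
qed

lemma direct_system_W: "direct_system (RlimK (Acpl H n) (alcpl eta n)) (RlimK_tr (Acpl H n) (alcpl eta n)) UNIV"
proof
  fix k :: int and c
  assume "c \<in> carr (RlimK (Acpl H n) (alcpl eta n) (k - 1))"
  then obtain a where "a \<in> Kseq n (k - 1)" "c = lclsK n (k - 1) a"
    using carr_RlimK_iff by meson
  then show "RlimK_tr (Acpl H n) (alcpl eta n) k c \<in> carr (RlimK (Acpl H n) (alcpl eta n) k)"
    using RlimK_tr_lclsK carr_RlimK_iff Kseq_eta[of a n "k - 1" k] by auto
qed auto

lemma push_RlimK_tr:
  assumes a: "a \<in> Kseq n s" and "s \<le> u"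
  shows "push (RlimK_tr (Acpl H n) (alcpl eta n)) s u (lclsK n s a) = lclsK n u (\<lambda>r. eta (Fin s) PInf (Fin u) PInf n (a r))"
  using \<open>s \<le> u\<close>
proof (induction rule: int_ge_induct)
  case base
  then show ?case using a eta_id Kseq_carr by simp
next
  case (step v)
  then show ?case
    using RlimK_tr_lclsK[of "\<lambda>r. eta (Fin s) PInf (Fin v) PInf n (a r)" n "v + 1"]
      Kseq_eta[OF a step(1)] eta_comp[OF Kseq_carr[OF a]]
    by (simp add: push_step)
qed

lemma Wcls_eq_iff:
  assumes a: "a \<in> Kseq n s" and b: "b \<in> Kseq n s'"
  shows "Wcls n s a = Wcls n s' b \<longleftrightarrow> (\<exists>u. s \<le> u \<and> s' \<le> u \<and>
      lclsK n u (\<lambda>r. eta (Fin s) PInf (Fin u) PInf n (a r)) = lclsK n u (\<lambda>r. eta (Fin s') PInf (Fin u) PInf n (b r)))"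
proof -
  interpret W: direct_system "RlimK (Acpl H n) (alcpl eta n)" "RlimK_tr (Acpl H n) (alcpl eta n)" UNIV
    by (rule direct_system_W)
  show ?thesis
    unfolding Wcls_def using W.cls_eq_iff[of s s' "lclsK n s a" "lclsK n s' b"] a b lclsK_carr push_RlimK_tr
    by auto
qed

lemma carr_Wpp_iff: "c \<in> carr (Wpp H eta n) \<longleftrightarrow> (\<exists>s a. a \<in> Kseq n s \<and> c = Wcls n s a)"
proof -
  interpret W: direct_system "RlimK (Acpl H n) (alcpl eta n)" "RlimK_tr (Acpl H n) (alcpl eta n)" UNIV
    by (rule direct_system_W)
  show ?thesis
    unfolding Wpp_def Wgrp_def W.carr_colim Wcls_def carr_RlimK_iff by blast
qed

lemma rep_Wcls:
  assumes a: "a \<in> Kseq n s" and r: "rep (Wcls n s a) = (s0, d0)"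
  shows "rep d0 \<in> Kseq n s0" "Wcls n s0 (rep d0) = Wcls n s a"
proof -
  interpret W: direct_system "RlimK (Acpl H n) (alcpl eta n)" "RlimK_tr (Acpl H n) (alcpl eta n)" UNIV
    by (rule direct_system_W)
  interpret T: tower "Kim_tower n s0" "\<lambda>r x. x"
    by (rule tower_Kim)
  have R: "d0 \<in> carr (RlimK (Acpl H n) (alcpl eta n) s0)" "W.cls (s0, d0) = W.cls (s, lclsK n s a)"
    using W.rep_cls[OF UNIV_I lclsK_carr[OF a] r[unfolded Wcls_def]] by auto
  obtain b where b: "b \<in> Kseq n s0" "d0 = lclsK n s0 b"
    using R(1) carr_RlimK_iff by meson
  show "rep d0 \<in> Kseq n s0" using T.rep_lcls(2)[of b] b Seq_Kim_tower by simp
  show "Wcls n s0 (rep d0) = Wcls n s a" using T.rep_lcls(3)[of b] b Seq_Kim_tower R(2) by (simp add: Wcls_def)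
qed

lemma Wcls_add:
  assumes a: "a \<in> Kseq n s" and b: "b \<in> Kseq n s'" and "s \<le> u" "s' \<le> u"
  shows "madd (Wpp H eta n) (Wcls n s a) (Wcls n s' b) =
     Wcls n u (\<lambda>r. madd (H (Fin u) PInf n) (eta (Fin s) PInf (Fin u) PInf n (a r)) (eta (Fin s') PInf (Fin u) PInf n (b r)))"
proof -
  interpret W: direct_system "RlimK (Acpl H n) (alcpl eta n)" "RlimK_tr (Acpl H n) (alcpl eta n)" UNIV
    by (rule direct_system_W)
  have add_carr: "madd (RlimK (Acpl H n) (alcpl eta n) j) c d \<in> carr (RlimK (Acpl H n) (alcpl eta n) j)"
    if "c \<in> carr (RlimK (Acpl H n) (alcpl eta n) j)" "d \<in> carr (RlimK (Acpl H n) (alcpl eta n) j)" for j c d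
    using that carr_RlimK_iff lclsK_add Kseq_add by auto
  show ?thesis
    unfolding Wpp_def Wgrp_def Wcls_def
    using W.cls_add[OF RlimK_tr_add add_carr, of s s' "lclsK n s a" "lclsK n s' b" u] assms
      lclsK_carr push_RlimK_tr lclsK_add Kseq_eta
    by auto
qed

lemma Wcls_smul:
  assumes a: "a \<in> Kseq n s"
  shows "msmul (Wpp H eta n) c (Wcls n s a) = Wcls n s (\<lambda>r. msmul (H (Fin s) PInf n) c (a r))"
proof -
  interpret W: direct_system "RlimK (Acpl H n) (alcpl eta n)" "RlimK_tr (Acpl H n) (alcpl eta n)" UNIV
    by (rule direct_system_W)
  have smul_carr: "msmul (RlimK (Acpl H n) (alcpl eta n) j) c x \<in> carr (RlimK (Acpl H n) (alcpl eta n) j)"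
    if "x \<in> carr (RlimK (Acpl H n) (alcpl eta n) j)" for j x
    using that carr_RlimK_iff lclsK_smul Kseq_smul by auto
  show ?thesis
    unfolding Wpp_def Wgrp_def Wcls_def
    using W.cls_smul[OF RlimK_tr_smul smul_carr, of s "lclsK n s a"] a lclsK_carr lclsK_smul by auto
qed

end

section \<open>The isomorphism\<close>

definition bdry_sums :: "(zinf \<Rightarrow> zinf \<Rightarrow> int \<Rightarrow> ('r, 'a) rmod) \<Rightarrow> (zinf \<Rightarrow> zinf \<Rightarrow> zinf \<Rightarrow> int \<Rightarrow> 'a \<Rightarrow> 'a)
   \<Rightarrow> int \<Rightarrow> int \<Rightarrow> (nat \<Rightarrow> 'a) \<Rightarrow> int \<Rightarrow> 'a" where
  "bdry_sums H del n s a =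
     (\<lambda>i. if i \<le> s then del (Fin i) (Fin s) PInf n (msum (H (Fin s) PInf n) a (nat (s - i))) else undefined)"

definition Phi :: "(zinf \<Rightarrow> zinf \<Rightarrow> int \<Rightarrow> ('r::ring_1, 'a) rmod) \<Rightarrow> (zinf \<Rightarrow> zinf \<Rightarrow> zinf \<Rightarrow> zinf \<Rightarrow> int \<Rightarrow> 'a \<Rightarrow> 'a)
   \<Rightarrow> (zinf \<Rightarrow> zinf \<Rightarrow> zinf \<Rightarrow> int \<Rightarrow> 'a \<Rightarrow> 'a) \<Rightarrow> int \<Rightarrow> (int \<times> (nat \<Rightarrow> 'a) set) set \<Rightarrow> (int \<times> (int \<Rightarrow> 'a)) set" where
  "Phi H eta del n c = (case rep c of (s, d) \<Rightarrow>
      colim_cls (LimH H eta (n - 1)) (LimH_tr eta (n - 1)) UNIV (s, bdry_sums H del n s (rep d)))"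

context right_CE_system
begin

lemma bdry_sums_carr:
  assumes a: "a \<in> Kseq n s"
  shows "bdry_sums H del n s a \<in> carr (LimH H eta (n - 1) s)"
proof -
  have ac: "\<And>r. a r \<in> carr (H (Fin s) PInf n)"
    using a Kseq_carr by blast
  have P: "\<And>k. msum (H (Fin s) PInf n) a k \<in> carr (H (Fin s) PInf n)"
    using msum_carr[OF H_inf_rmod ac] by simp
  have "eta (Fin (i - 1)) (Fin s) (Fin i) (Fin s) (n - 1) (bdry_sums H del n s a (i - 1)) = bdry_sums H del n s a i"
    if i: "i \<le> s" for i
  proof -
    have e: "nat (s - (i - 1)) = Suc (nat (s - i))" using i by simp
    have "eta (Fin (i - 1)) (Fin s) (Fin i) (Fin s) (n - 1) (bdry_sums H del n s a (i - 1))
        = del (Fin i) (Fin s) PInf n (msum (H (Fin s) PInf n) a (Suc (nat (s - i))))"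
      using i del_nat[OF P[of "Suc (nat (s - i))"], of "Fin (i - 1)" "Fin i" "Fin s" PInf] eta_id[OF P[of "Suc (nat (s - i))"]]
      by (simp add: bdry_sums_def e del: msum.simps)
    also have "\<dots> = del (Fin i) (Fin s) PInf n (msum (H (Fin s) PInf n) a (nat (s - i)))"
      by (rule additive_msum_stable[OF H_inf_rmod H_rmod]) (use i a ac in \<open>auto simp: del_add del_carr Kseq_def intro!: del_Kim_zero\<close>)
    finally show ?thesis using i by (simp add: bdry_sums_def)
  qed
  then show ?thesis
    unfolding carr_LimH_iff using P by (auto simp: bdry_sums_def del_carr)
qed

lemma limH_push_bdry_sums:
  assumes a: "a \<in> Kseq n s" and su: "s \<le> u"
  shows "limH_push (n - 1) s u (bdry_sums H del n s a) = bdry_sums H del n u (\<lambda>r. eta (Fin s) PInf (Fin u) PInf n (a r))"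
proof (rule ext)
  fix i
  have ac: "\<And>r. a r \<in> carr (H (Fin s) PInf n)"
    using a Kseq_carr by blast
  have P: "\<And>k. msum (H (Fin s) PInf n) a k \<in> carr (H (Fin s) PInf n)"
    using msum_carr[OF H_inf_rmod ac] by simp
  show "limH_push (n - 1) s u (bdry_sums H del n s a) i = bdry_sums H del n u (\<lambda>r. eta (Fin s) PInf (Fin u) PInf n (a r)) i"
  proof (cases "i \<le> u")
    case False
    then show ?thesis by (simp add: limH_push_def bdry_sums_def)
  next
    case True
    define k0 where "k0 = nat (s - min i s)"
    define F where "F = (\<lambda>x. del (Fin i) (Fin u) PInf n (eta (Fin s) PInf (Fin u) PInf n x))"
    have "limH_push (n - 1) s u (bdry_sums H del n s a) i = F (msum (H (Fin s) PInf n) a k0)"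
      using True su del_nat[OF P, of "Fin (min i s)" "Fin i" "Fin u" PInf] by (simp add: limH_push_def bdry_sums_def F_def k0_def)
    also have "\<dots> = F (msum (H (Fin s) PInf n) a (nat (u - i)))"
      by (rule additive_msum_stable[OF H_inf_rmod H_rmod, symmetric])
        (use True su a ac in \<open>auto simp: F_def del_add eta_add del_carr eta_carr Kseq_def k0_def intro!: del_eta_Kim_zero\<close>)
    also have "\<dots> = bdry_sums H del n u (\<lambda>r. eta (Fin s) PInf (Fin u) PInf n (a r)) i"
      using True su hom_msum[OF H_inf_rmod H_inf_rmod eta_inf_hom[OF su] ac] by (simp add: F_def bdry_sums_def)
    finally show ?thesis .
  qed
qed

lemma clsCL_bdry_sums_eta:
  assumes a: "a \<in> Kseq n s" and "s \<le> u"
  shows "clsCL (n - 1) (s, bdry_sums H del n s a)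
    = clsCL (n - 1) (u, bdry_sums H del n u (\<lambda>r. eta (Fin s) PInf (Fin u) PInf n (a r)))"
  using ColimLim_cls_eq_iff[OF bdry_sums_carr[OF a] bdry_sums_carr[OF Kseq_eta[OF a \<open>s \<le> u\<close>]]]
    limH_push_bdry_sums[OF a \<open>s \<le> u\<close>] limH_push_self[OF bdry_sums_carr[OF Kseq_eta[OF a \<open>s \<le> u\<close>]]] \<open>s \<le> u\<close>
  by auto

lemma bdry_sums_add:
  assumes a: "a \<in> Kseq n u" and b: "b \<in> Kseq n u"
  shows "bdry_sums H del n u (\<lambda>r. madd (H (Fin u) PInf n) (a r) (b r))
    = madd (LimH H eta (n - 1) u) (bdry_sums H del n u a) (bdry_sums H del n u b)"
proof -
  have "\<And>r. a r \<in> carr (H (Fin u) PInf n)" "\<And>r. b r \<in> carr (H (Fin u) PInf n)"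
    using a b Kseq_carr by blast+
  then show ?thesis
    using msum_add[OF H_inf_rmod] msum_carr[OF H_inf_rmod]
    by (auto simp: bdry_sums_def LimH_def ilim_def del_add)
qed

lemma bdry_sums_smul:
  assumes a: "a \<in> Kseq n u"
  shows "bdry_sums H del n u (\<lambda>r. msmul (H (Fin u) PInf n) c (a r)) = msmul (LimH H eta (n - 1) u) c (bdry_sums H del n u a)"
proof -
  have "\<And>r. a r \<in> carr (H (Fin u) PInf n)"
    using a Kseq_carr by blast
  then show ?thesis
    using msum_smul[OF H_inf_rmod] msum_carr[OF H_inf_rmod]
    by (auto simp: bdry_sums_def LimH_def ilim_def del_smul)
qed

lemma bdry_sums_neg:
  assumes a: "a \<in> Kseq n u"
  shows "bdry_sums H del n u (\<lambda>r. mneg (H (Fin u) PInf n) (a r)) = mneg (LimH H eta (n - 1) u) (bdry_sums H del n u a)"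
proof -
  have "\<And>r. a r \<in> carr (H (Fin u) PInf n)"
    using a Kseq_carr by blast
  then show ?thesis
    using msum_neg[OF H_inf_rmod] msum_carr[OF H_inf_rmod]
    by (auto simp: bdry_sums_def LimH_def ilim_def del_neg)
qed

lemma Kseq_delta:
  assumes w: "w \<in> Kseq n s"
  shows "lim1_delta (Kim_tower n s) (\<lambda>r x. x) w \<in> Kseq n s"
  using w Kim_SucD by (auto simp: Kseq_def lim1_delta_def intro!: Kim_add Kim_neg)

lemma bdry_sums_delta:
  assumes w: "w \<in> Kseq n t" and "i \<le> t"
  shows "bdry_sums H del n t (lim1_delta (Kim_tower n t) (\<lambda>r x. x) w) i = del (Fin i) (Fin t) PInf n (w 0)"
proof -
  let ?k = "nat (t - i)"
  have wc: "\<And>r. w r \<in> carr (H (Fin t) PInf n)" using w Kseq_carr by blast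
  have "msum (H (Fin t) PInf n) (lim1_delta (Kim_tower n t) (\<lambda>r x. x) w) ?k
      = madd (H (Fin t) PInf n) (w 0) (mneg (H (Fin t) PInf n) (w ?k))"
    unfolding lim1_delta_def Kim_tower_simps by (rule msum_telescope[OF H_inf_rmod wc])
  moreover have "del (Fin i) (Fin t) PInf n (w ?k) = mzero (H (Fin i) (Fin t) (n - 1))"
    using w \<open>i \<le> t\<close> by (auto simp: Kseq_def intro: del_Kim_zero)
  ultimately show ?thesis
    using \<open>i \<le> t\<close> wc del_carr[OF wc]
    by (simp add: bdry_sums_def del_add del_neg rmod_neg_carr[OF H_inf_rmod] rmod_neg_zero[OF H_rmod]
        rmod_add_zero[OF H_rmod])
qed

lemma limH_push_bdry_sums_add_delta:
  assumes a: "a \<in> Kseq n t" and w: "w \<in> Kseq n t" and "t \<le> v"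
    and dies: "eta (Fin t) PInf (Fin v) PInf n (w 0) = mzero (H (Fin v) PInf n)"
  shows "limH_push (n - 1) t v (bdry_sums H del n t
      (\<lambda>r. madd (H (Fin t) PInf n) (a r) (lim1_delta (Kim_tower n t) (\<lambda>r x. x) w r)))
    = limH_push (n - 1) t v (bdry_sums H del n t a)"
proof (rule ext)
  fix i
  show "limH_push (n - 1) t v (bdry_sums H del n t
      (\<lambda>r. madd (H (Fin t) PInf n) (a r) (lim1_delta (Kim_tower n t) (\<lambda>r x. x) w r))) i
    = limH_push (n - 1) t v (bdry_sums H del n t a) i"
  proof (cases "i \<le> v")
    case True
    let ?i = "min i t"
    have w0: "w 0 \<in> carr (H (Fin t) PInf n)" using w Kseq_carr by blast
    have x: "bdry_sums H del n t a ?i \<in> carr (H (Fin ?i) (Fin t) (n - 1))"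
      using bdry_sums_carr[OF a] by (simp add: carr_LimH_iff)
    have "eta (Fin ?i) (Fin t) (Fin i) (Fin v) (n - 1) (del (Fin ?i) (Fin t) PInf n (w 0))
        = mzero (H (Fin i) (Fin v) (n - 1))"
      using del_nat[OF w0, of "Fin ?i" "Fin i" "Fin v" PInf] dies True \<open>t \<le> v\<close> del_zero by simp
    then show ?thesis
      using True \<open>t \<le> v\<close> x bdry_sums_delta[OF w, of ?i] del_carr[OF w0, of "Fin ?i"]
      by (simp add: limH_push_def bdry_sums_add[OF a Kseq_delta[OF w]] LimH_def ilim_def eta_add
          rmod_add_zero[OF H_rmod] eta_carr)
  qed (simp add: limH_push_def)
qed

lemma bdry_sums_well_defined:
  assumes a: "a \<in> Kseq n s" and b: "b \<in> Kseq n s'" and eq: "Wcls n s a = Wcls n s' b"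
  shows "clsCL (n - 1) (s, bdry_sums H del n s a) = clsCL (n - 1) (s', bdry_sums H del n s' b)"
proof -
  obtain t where t: "s \<le> t" "s' \<le> t"
    "lclsK n t (\<lambda>r. eta (Fin s) PInf (Fin t) PInf n (a r)) = lclsK n t (\<lambda>r. eta (Fin s') PInf (Fin t) PInf n (b r))"
    using Wcls_eq_iff[OF a b] eq by auto
  define a' where "a' = (\<lambda>r. eta (Fin s) PInf (Fin t) PInf n (a r))"
  define b' where "b' = (\<lambda>r. eta (Fin s') PInf (Fin t) PInf n (b r))"
  have a': "a' \<in> Kseq n t" and b': "b' \<in> Kseq n t"
    using Kseq_eta a b t by (auto simp: a'_def b'_def)
  interpret T: tower "Kim_tower n t" "\<lambda>r x. x"
    by (rule tower_Kim)
  have "b' \<in> lclsK n t a'"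
    using T.lcls_eq_iff[of a' b'] a' b' t Seq_Kim_tower by (simp add: a'_def b'_def)
  then obtain w where w: "w \<in> Kseq n t"
    and b'_eq: "b' = (\<lambda>r. madd (H (Fin t) PInf n) (a' r) (lim1_delta (Kim_tower n t) (\<lambda>r x. x) w r))"
    unfolding T.lcls_mem_iff Seq_Kim_tower by auto
  obtain v where v: "t \<le> v" "eta (Fin t) PInf (Fin v) PInf n (w 0) = mzero (H (Fin v) PInf n)"
    using w by (auto simp: Kseq_def Kim_def)
  have "clsCL (n - 1) (t, bdry_sums H del n t a') = clsCL (n - 1) (t, bdry_sums H del n t b')"
    using ColimLim_cls_eq_iff[OF bdry_sums_carr[OF a'] bdry_sums_carr[OF b']]
      limH_push_bdry_sums_add_delta[OF a' w v] v(1) b'_eq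
    by auto
  then show ?thesis
    using clsCL_bdry_sums_eta[OF a t(1)] clsCL_bdry_sums_eta[OF b t(2)] by (simp add: a'_def b'_def)
qed

lemma Phi_Wcls:
  assumes a: "a \<in> Kseq n s"
  shows "Phi H eta del n (Wcls n s a) = clsCL (n - 1) (s, bdry_sums H del n s a)"
proof -
  obtain s0 d0 where r: "rep (Wcls n s a) = (s0, d0)"
    by (metis prod.exhaust)
  note R = rep_Wcls[OF a r]
  show ?thesis
    unfolding Phi_def r using bdry_sums_well_defined[OF R(1) a R(2)] by simp
qed

lemma msum_Kim_of_bdry_sums_zero:
  assumes e: "e \<in> Kseq n u"
    and zero: "\<And>i. i \<le> u \<Longrightarrow> bdry_sums H del n u e i = mzero (H (Fin i) (Fin u) (n - 1))"
  shows "msum (H (Fin u) PInf n) e q \<in> Kim n q u"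
  using msum_Kim[OF e, of q] zero[of "u - int q"] by (simp add: Kim_def bdry_sums_def)

lemma lclsK_eq_if_bdry_sums_eq:
  assumes a: "a \<in> Kseq n u" and b: "b \<in> Kseq n u" and eq: "bdry_sums H del n u a = bdry_sums H del n u b"
  shows "lclsK n u a = lclsK n u b"
proof -
  let ?A = "H (Fin u) PInf n"
  define e where "e = (\<lambda>r. madd ?A (b r) (mneg ?A (a r)))"
  have e: "e \<in> Kseq n u" unfolding e_def using Kseq_add[OF b Kseq_neg[OF a]] .
  have ac: "\<And>r. a r \<in> carr ?A" and bc: "\<And>r. b r \<in> carr ?A" and ec: "\<And>r. e r \<in> carr ?A"
    using a b e Kseq_carr by blast+
  have "bdry_sums H del n u e i = mzero (H (Fin i) (Fin u) (n - 1))" if "i \<le> u" for i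
    using that bdry_sums_carr[OF a] eq
    by (simp add: e_def bdry_sums_add[OF b Kseq_neg[OF a]] bdry_sums_neg[OF a] LimH_def ilim_def
        carr_LimH_iff rmod_add_neg_self[OF H_rmod])
  then have "msum ?A e q \<in> Kim n q u" for q
    using msum_Kim_of_bdry_sums_zero[OF e] by blast
  then have w: "(\<lambda>q. mneg ?A (msum ?A e q)) \<in> Kseq n u"
    by (simp add: Kseq_def Kim_neg)
  have "b r = madd ?A (a r) (lim1_delta (Kim_tower n u) (\<lambda>r x. x) (\<lambda>q. mneg ?A (msum ?A e q)) r)" for r
  proof -
    have "madd ?A (a r) (e r) = madd ?A (madd ?A (a r) (mneg ?A (a r))) (b r)"
      unfolding e_def using ac bc by (metis rmod_add_assoc[OF H_inf_rmod] rmod_add_comm[OF H_inf_rmod] rmod_neg_carr[OF H_inf_rmod])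
    moreover have "madd ?A (mneg ?A (msum ?A e r)) (mneg ?A (mneg ?A (msum ?A e (Suc r)))) = e r"
      by (rule neg_msum_diff[OF H_inf_rmod ec])
    ultimately show ?thesis
      using ac bc by (simp add: lim1_delta_def rmod_add_neg_self[OF H_inf_rmod] rmod_zero_add[OF H_inf_rmod])
  qed
  then have "b \<in> lclsK n u a"
    using b w by (auto simp: tower.lcls_mem_iff[OF tower_Kim] Seq_Kim_tower)
  then show ?thesis
    using tower.lcls_eq_iff[OF tower_Kim] a b Seq_Kim_tower by simp
qed

lemma bdry_lift:
  assumes X: "X \<in> carr (LimH H eta (n - 1) j)" and "i \<le> j" and "j \<le> u"
    and dies: "eta (Fin i) (Fin j) (Fin i) (Fin u) (n - 1) (X i) = mzero (H (Fin i) (Fin u) (n - 1))"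
  shows "\<exists>z. z \<in> Kim n 0 j \<and> del (Fin i) (Fin j) PInf n z = X i"
proof -
  have Xi: "X i \<in> carr (H (Fin i) (Fin j) (n - 1))"
    using X \<open>i \<le> j\<close> by (simp add: carr_LimH_iff)
  then have "X i \<in> del (Fin i) (Fin j) (Fin u) n ` carr (H (Fin j) (Fin u) n)"
    using exact_at_Hij[of "Fin i" "Fin j" "Fin u" n] assms by simp
  then obtain b where b: "b \<in> carr (H (Fin j) (Fin u) n)" "X i = del (Fin i) (Fin j) (Fin u) n b"
    by auto
  define z where "z = eta (Fin j) (Fin u) (Fin j) PInf n b"
  have zc: "z \<in> carr (H (Fin j) PInf n)"
    using b \<open>j \<le> u\<close> by (simp add: z_def eta_carr)
  have "del (Fin i) (Fin j) PInf n z = eta (Fin i) (Fin j) (Fin i) (Fin j) (n - 1) (del (Fin i) (Fin j) (Fin u) n b)"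
    using del_nat[OF b(1), of "Fin i" "Fin i" "Fin j" PInf] assms by (simp add: z_def)
  also have "\<dots> = X i"
    using b Xi eta_id \<open>i \<le> j\<close> by simp
  finally have "del (Fin i) (Fin j) PInf n z = X i" .
  moreover have "eta (Fin j) PInf (Fin u) PInf n z = mzero (H (Fin u) PInf n)"
    using b exact_at_Hik[of "Fin j" "Fin u" PInf n] \<open>j \<le> u\<close> by (auto simp: z_def)
  moreover have "del (Fin j) (Fin j) PInf n z = mzero (H (Fin j) (Fin j) (n - 1))"
    using H_diag_trivial del_carr[OF zc] by simp
  ultimately show ?thesis
    using zc \<open>j \<le> u\<close> by (auto simp: Kim_def)
qed

lemma Kseq_lift_diffs:
  assumes X: "X \<in> carr (LimH H eta (n - 1) j)"
    and lift: "\<And>i. i \<le> j \<Longrightarrow> z i \<in> Kim n 0 j \<and> del (Fin i) (Fin j) PInf n (z i) = X i"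
  shows "(\<lambda>r. madd (H (Fin j) PInf n) (z (j - int r - 1)) (mneg (H (Fin j) PInf n) (z (j - int r)))) \<in> Kseq n j"
  unfolding Kseq_def
proof (intro CollectI allI)
  fix r
  let ?i = "j - int r"
  have zc: "z (?i - 1) \<in> carr (H (Fin j) PInf n)" "z ?i \<in> carr (H (Fin j) PInf n)"
    using lift[of "?i - 1"] lift[of ?i] Kim_carr by auto
  have "del (Fin ?i) (Fin j) PInf n (z (?i - 1))
      = eta (Fin (?i - 1)) (Fin j) (Fin ?i) (Fin j) (n - 1) (del (Fin (?i - 1)) (Fin j) PInf n (z (?i - 1)))"
    using del_nat[OF zc(1), of "Fin (?i - 1)" "Fin ?i" "Fin j" PInf] eta_id[OF zc(1)] by simp
  also have "\<dots> = X ?i"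
    using lift[of "?i - 1"] X by (simp add: carr_LimH_iff)
  finally have "del (Fin ?i) (Fin j) PInf n (madd (H (Fin j) PInf n) (z (?i - 1)) (mneg (H (Fin j) PInf n) (z ?i)))
      = madd (H (Fin ?i) (Fin j) (n - 1)) (X ?i) (mneg (H (Fin ?i) (Fin j) (n - 1)) (X ?i))"
    using zc lift[of ?i] by (simp add: del_add del_neg rmod_neg_carr[OF H_inf_rmod])
  also have "\<dots> = mzero (H (Fin ?i) (Fin j) (n - 1))"
    using X by (simp add: carr_LimH_iff rmod_add_neg_self[OF H_rmod])
  moreover have "madd (H (Fin j) PInf n) (z (?i - 1)) (mneg (H (Fin j) PInf n) (z ?i)) \<in> Kim n 0 j"
    using lift[of "?i - 1"] lift[of ?i] by (auto intro!: Kim_add Kim_neg)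
  ultimately show "madd (H (Fin j) PInf n) (z (?i - 1)) (mneg (H (Fin j) PInf n) (z ?i)) \<in> Kim n r j"
    by (simp add: Kim_def)
qed

lemma bdry_sums_surj:
  assumes X: "X \<in> carr (LimH H eta (n - 1) j)"
    and dies: "\<And>i. i \<le> j \<Longrightarrow> \<exists>u\<ge>j. eta (Fin i) (Fin j) (Fin i) (Fin u) (n - 1) (X i) = mzero (H (Fin i) (Fin u) (n - 1))"
  shows "\<exists>a\<in>Kseq n j. bdry_sums H del n j a = X"
proof -
  let ?A = "H (Fin j) PInf n"
  define z where "z = (\<lambda>i. if i < j then SOME z. z \<in> Kim n 0 j \<and> del (Fin i) (Fin j) PInf n z = X i else mzero ?A)"
  have lift: "z i \<in> Kim n 0 j \<and> del (Fin i) (Fin j) PInf n (z i) = X i" if "i \<le> j" for i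
  proof (cases "i < j")
    case True
    then show ?thesis
      using someI_ex[OF bdry_lift[OF X]] dies that by (fastforce simp: z_def)
  next
    case False
    then have "i = j" using that by simp
    moreover have "X j \<in> carr (H (Fin j) (Fin j) (n - 1))"
      using X by (simp add: carr_LimH_iff)
    ultimately show ?thesis
      using Kim_zero del_zero H_diag_trivial by (simp add: z_def)
  qed
  define a where "a = (\<lambda>r. madd ?A (z (j - int r - 1)) (mneg ?A (z (j - int r))))"
  have zc: "z (j - int r) \<in> carr ?A" for r
    using lift[of "j - int r"] Kim_carr by auto
  have "msum ?A a q = z (j - int q)" for q
  proof -
    have "msum ?A (\<lambda>r. madd ?A (z (j - int (Suc r))) (mneg ?A (z (j - int r)))) q
        = madd ?A (z (j - int q)) (mneg ?A (z (j - int 0)))"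
      by (rule msum_forward_telescope[OF H_inf_rmod zc])
    then show ?thesis
      using zc by (simp add: a_def z_def algebra_simps rmod_neg_zero[OF H_inf_rmod] rmod_add_zero[OF H_inf_rmod])
  qed
  then have "bdry_sums H del n j a = X"
    using lift X by (auto simp: bdry_sums_def carr_LimH_iff)
  then show ?thesis
    using Kseq_lift_diffs[OF X lift] by (auto simp: a_def)
qed

lemma Phi_Wcls_in_ker:
  assumes a: "a \<in> Kseq n s"
  shows "Phi H eta del n (Wcls n s a) \<in> carr (ker_kappa H eta (n - 1))"
proof -
  have "\<exists>u\<ge>s. eta (Fin i) (Fin s) (Fin i) (Fin u) (n - 1) (bdry_sums H del n s a i) = mzero (H (Fin i) (Fin u) (n - 1))"
    if "i \<le> s" for i
  proof -
    define P where "P = msum (H (Fin s) PInf n) a (nat (s - i))"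
    have P: "P \<in> Kim n 0 s"
      using msum_Kim[OF a] by (simp add: P_def)
    then obtain u where u: "s \<le> u" "eta (Fin s) PInf (Fin u) PInf n P = mzero (H (Fin u) PInf n)"
      by (auto simp: Kim_def)
    have "eta (Fin i) (Fin s) (Fin i) (Fin u) (n - 1) (bdry_sums H del n s a i)
        = del (Fin i) (Fin u) PInf n (eta (Fin s) PInf (Fin u) PInf n P)"
      using \<open>i \<le> s\<close> u del_nat[OF Kim_carr[OF P], of "Fin i" "Fin i" "Fin u" PInf] by (simp add: bdry_sums_def P_def)
    then show ?thesis
      using u \<open>i \<le> s\<close> del_zero by auto
  qed
  then show ?thesis
    using Phi_Wcls[OF a] ker_kappa_cls_iff[OF bdry_sums_carr[OF a]] by simp
qed

lemma Phi_add:
  assumes a: "a \<in> Kseq n s" and b: "b \<in> Kseq n s'"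
  shows "Phi H eta del n (madd (Wpp H eta n) (Wcls n s a) (Wcls n s' b))
    = madd (ker_kappa H eta (n - 1)) (Phi H eta del n (Wcls n s a)) (Phi H eta del n (Wcls n s' b))"
proof -
  define u where "u = max s s'"
  have su: "s \<le> u" "s' \<le> u" by (auto simp: u_def)
  define a' where "a' = (\<lambda>r. eta (Fin s) PInf (Fin u) PInf n (a r))"
  define b' where "b' = (\<lambda>r. eta (Fin s') PInf (Fin u) PInf n (b r))"
  have a': "a' \<in> Kseq n u" and b': "b' \<in> Kseq n u"
    using Kseq_eta a b su by (auto simp: a'_def b'_def)
  have "Phi H eta del n (madd (Wpp H eta n) (Wcls n s a) (Wcls n s' b))
      = clsCL (n - 1) (u, bdry_sums H del n u (\<lambda>r. madd (H (Fin u) PInf n) (a' r) (b' r)))"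
    using Wcls_add[OF a b su] Phi_Wcls Kseq_add[OF a' b'] by (simp add: a'_def b'_def)
  also have "\<dots> = clsCL (n - 1) (u, madd (LimH H eta (n - 1) u)
      (limH_push (n - 1) s u (bdry_sums H del n s a)) (limH_push (n - 1) s' u (bdry_sums H del n s' b)))"
    using bdry_sums_add[OF a' b'] limH_push_bdry_sums a b su by (simp add: a'_def b'_def)
  also have "\<dots> = madd (ker_kappa H eta (n - 1)) (Phi H eta del n (Wcls n s a)) (Phi H eta del n (Wcls n s' b))"
    using ColimLim_cls_add[OF bdry_sums_carr[OF a] bdry_sums_carr[OF b] su] Phi_Wcls a b
    by (simp add: ker_kappa_def kerm_def ColimLim_def)
  finally show ?thesis .
qed

lemma Phi_smul:
  assumes a: "a \<in> Kseq n s"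
  shows "Phi H eta del n (msmul (Wpp H eta n) r (Wcls n s a)) = msmul (ker_kappa H eta (n - 1)) r (Phi H eta del n (Wcls n s a))"
  using Wcls_smul[OF a] Phi_Wcls Kseq_smul[OF a] bdry_sums_smul[OF a] ColimLim_cls_smul[OF bdry_sums_carr[OF a]] Phi_Wcls[OF a]
  by (simp add: ker_kappa_def kerm_def ColimLim_def)

lemma Phi_hom: "is_hom (Wpp H eta n) (ker_kappa H eta (n - 1)) (Phi H eta del n)"
  unfolding is_hom_def
  using carr_Wpp_iff Phi_Wcls_in_ker Phi_add Phi_smul by metis

lemma Phi_inj: "inj_on (Phi H eta del n) (carr (Wpp H eta n))"
proof (rule inj_onI)
  fix c d
  assume "c \<in> carr (Wpp H eta n)" "d \<in> carr (Wpp H eta n)" and eq: "Phi H eta del n c = Phi H eta del n d"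
  then obtain s a s' b where a: "a \<in> Kseq n s" "c = Wcls n s a" and b: "b \<in> Kseq n s'" "d = Wcls n s' b"
    using carr_Wpp_iff by meson
  obtain u where u: "s \<le> u" "s' \<le> u"
    "limH_push (n - 1) s u (bdry_sums H del n s a) = limH_push (n - 1) s' u (bdry_sums H del n s' b)"
    using eq a b Phi_Wcls ColimLim_cls_eq_iff[OF bdry_sums_carr[OF a(1)] bdry_sums_carr[OF b(1)]] by auto
  then have "lclsK n u (\<lambda>r. eta (Fin s) PInf (Fin u) PInf n (a r)) = lclsK n u (\<lambda>r. eta (Fin s') PInf (Fin u) PInf n (b r))"
    using lclsK_eq_if_bdry_sums_eq Kseq_eta a b limH_push_bdry_sums by simp
  then show "c = d"
    using Wcls_eq_iff[OF a(1) b(1)] a b u by auto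
qed

lemma Phi_surj: "Phi H eta del n ` carr (Wpp H eta n) = carr (ker_kappa H eta (n - 1))"
proof
  show "Phi H eta del n ` carr (Wpp H eta n) \<subseteq> carr (ker_kappa H eta (n - 1))"
    using Phi_hom by (auto simp: is_hom_def)
next
  interpret CL: direct_system "LimH H eta (n - 1)" "LimH_tr eta (n - 1)" UNIV
    by (rule direct_system_LimH)
  show "carr (ker_kappa H eta (n - 1)) \<subseteq> Phi H eta del n ` carr (Wpp H eta n)"
  proof
    fix c
    assume c: "c \<in> carr (ker_kappa H eta (n - 1))"
    then obtain j X where X: "X \<in> carr (LimH H eta (n - 1) j)" "c = clsCL (n - 1) (j, X)"
      by (auto simp: ker_kappa_def kerm_def ColimLim_def CL.carr_colim)
    then obtain a where "a \<in> Kseq n j" "bdry_sums H del n j a = X"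
      using bdry_sums_surj ker_kappa_cls_iff c by blast
    then show "c \<in> Phi H eta del n ` carr (Wpp H eta n)"
      using Phi_Wcls X carr_Wpp_iff by blast
  qed
qed

theorem Phi_iso: "is_iso (Wpp H eta n) (ker_kappa H eta (n - 1)) (Phi H eta del n)"
  unfolding is_iso_def bij_betw_def using Phi_hom Phi_inj Phi_surj by blast

end

section \<open>Naturality\<close>

locale right_CE_morphism = A: right_CE_system H eta del + B: right_CE_system H' eta' del'
  for H :: "zinf \<Rightarrow> zinf \<Rightarrow> int \<Rightarrow> ('r::ring_1, 'a) rmod" and eta del
    and H' :: "zinf \<Rightarrow> zinf \<Rightarrow> int \<Rightarrow> ('r::ring_1, 'a) rmod" and eta' del' +
  fixes f :: "zinf \<Rightarrow> zinf \<Rightarrow> int \<Rightarrow> 'a \<Rightarrow> 'a"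
  assumes right_CE_mor: "right_CE_mor H eta del H' eta' del' f"
begin

lemma f_hom: "zle i j \<Longrightarrow> is_hom (H i j n) (H' i j n) (f i j n)"
  using right_CE_mor unfolding right_CE_mor_def by (elim conjE) blast

lemma f_eta:
  "x \<in> carr (H i j n) \<Longrightarrow> zle i j \<Longrightarrow> zle i' j' \<Longrightarrow> zle i i' \<Longrightarrow> zle j j' \<Longrightarrow>
   f i' j' n (eta i j i' j' n x) = eta' i j i' j' n (f i j n x)"
  using right_CE_mor unfolding right_CE_mor_def by (elim conjE) blast

lemma f_del:
  "x \<in> carr (H j k n) \<Longrightarrow> zle i j \<Longrightarrow> zle j k \<Longrightarrow> f i j (n - 1) (del i j k n x) = del' i j k n (f j k n x)"
  using right_CE_mor unfolding right_CE_mor_def by (elim conjE) blast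

lemma f_carr: "x \<in> carr (H i j n) \<Longrightarrow> zle i j \<Longrightarrow> f i j n x \<in> carr (H' i j n)"
  using hom_carr[OF f_hom] by blast

lemma f_zero: "zle i j \<Longrightarrow> f i j n (mzero (H i j n)) = mzero (H' i j n)"
  using hom_zero[OF A.H_rmod B.H_rmod f_hom] by blast

lemma f_Kim:
  assumes x: "x \<in> A.Kim n r s"
  shows "f (Fin s) PInf n x \<in> B.Kim n r s"
proof -
  have c: "x \<in> carr (H (Fin s) PInf n)" using x A.Kim_carr by blast
  obtain u where u: "s \<le> u" "eta (Fin s) PInf (Fin u) PInf n x = mzero (H (Fin u) PInf n)"
    using x by (auto simp: A.Kim_def)
  have "del' (Fin (s - int r)) (Fin s) PInf n (f (Fin s) PInf n x)
      = f (Fin (s - int r)) (Fin s) (n - 1) (del (Fin (s - int r)) (Fin s) PInf n x)"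
    using f_del[OF c] by simp
  also have "\<dots> = mzero (H' (Fin (s - int r)) (Fin s) (n - 1))"
    using x f_zero by (simp add: A.Kim_def)
  finally have "del' (Fin (s - int r)) (Fin s) PInf n (f (Fin s) PInf n x) = mzero (H' (Fin (s - int r)) (Fin s) (n - 1))" .
  moreover have "eta' (Fin s) PInf (Fin u) PInf n (f (Fin s) PInf n x) = mzero (H' (Fin u) PInf n)"
    using f_eta[OF c, of "Fin u" PInf] u f_zero by simp
  ultimately show ?thesis
    using u f_carr[OF c] by (auto simp: B.Kim_def)
qed

definition limH_map :: "int \<Rightarrow> int \<Rightarrow> (int \<Rightarrow> 'a) \<Rightarrow> int \<Rightarrow> 'a" where
  "limH_map m j Y = (\<lambda>i. if i \<le> j then f (Fin i) (Fin j) m (Y i) else undefined)"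

lemma limH_map_carr: "Y \<in> carr (LimH H eta m j) \<Longrightarrow> limH_map m j Y \<in> carr (LimH H' eta' m j)"
  unfolding A.carr_LimH_iff B.carr_LimH_iff limH_map_def
  by (auto simp: f_carr f_eta[symmetric])

lemma limH_push_map:
  assumes Y: "Y \<in> carr (LimH H eta m j)" and "j \<le> u"
  shows "B.limH_push m j u (limH_map m j Y) = limH_map m u (A.limH_push m j u Y)"
proof (rule ext)
  fix i
  have "Y (min i j) \<in> carr (H (Fin (min i j)) (Fin j) m)"
    using Y by (simp add: A.carr_LimH_iff)
  then show "B.limH_push m j u (limH_map m j Y) i = limH_map m u (A.limH_push m j u Y) i"
    using \<open>j \<le> u\<close> f_eta[of _ "Fin (min i j)" "Fin j" m "Fin i" "Fin u"]
    by (auto simp: B.limH_push_def A.limH_push_def limH_map_def)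
qed

lemma ker_kappa_map_cls:
  assumes Y: "Y \<in> carr (LimH H eta m j)"
  shows "ker_kappa_map H' eta' f m (A.clsCL m (j, Y)) = B.clsCL m (j, limH_map m j Y)"
proof -
  interpret CL: direct_system "LimH H eta m" "LimH_tr eta m" UNIV
    by (rule A.direct_system_LimH)
  obtain j' Y' where r: "rep (A.clsCL m (j, Y)) = (j', Y')"
    by (metis prod.exhaust)
  note R = CL.rep_cls[OF UNIV_I Y r]
  obtain u where u: "j \<le> u" "j' \<le> u" "A.limH_push m j u Y = A.limH_push m j' u Y'"
    using A.ColimLim_cls_eq_iff[OF Y R(2)] R by auto
  have "B.clsCL m (j', limH_map m j' Y') = B.clsCL m (j, limH_map m j Y)"
    using B.ColimLim_cls_eq_iff[OF limH_map_carr[OF R(2)] limH_map_carr[OF Y]]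
      limH_push_map[OF Y u(1)] limH_push_map[OF R(2) u(2)] u
    by auto
  then show ?thesis
    unfolding ker_kappa_map_def r by (simp add: limH_map_def)
qed

lemma limH_map_bdry_sums:
  assumes a: "a \<in> A.Kseq n s"
  shows "limH_map (n - 1) s (bdry_sums H del n s a) = bdry_sums H' del' n s (\<lambda>r. f (Fin s) PInf n (a r))"
proof -
  have ac: "\<And>r. a r \<in> carr (H (Fin s) PInf n)"
    using a A.Kseq_carr by blast
  then have "msum (H (Fin s) PInf n) a k \<in> carr (H (Fin s) PInf n)" for k
    using msum_carr[OF A.H_inf_rmod] by blast
  then show ?thesis
    using f_del hom_msum[OF A.H_inf_rmod B.H_inf_rmod f_hom, where a = a] ac
    by (auto simp: limH_map_def bdry_sums_def)
qed

lemma Wpp_map_Wcls: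
  assumes r: "rep (A.Wcls n s a) = (s0, d0)"
  shows "Wpp_map H' eta' f n (A.Wcls n s a) = B.Wcls n s0 (\<lambda>q. f (Fin s0) PInf n (rep d0 q))"
  unfolding Wpp_map_def Wmap_def r by (simp add: B.Wcls_def B.Ktower_eq_Kim_tower)

theorem Phi_natural:
  assumes c: "c \<in> carr (Wpp H eta n)"
  shows "Phi H' eta' del' n (Wpp_map H' eta' f n c) = ker_kappa_map H' eta' f (n - 1) (Phi H eta del n c)"
proof -
  obtain s a where a: "a \<in> A.Kseq n s" "c = A.Wcls n s a"
    using c A.carr_Wpp_iff by blast
  obtain s0 d0 where r: "rep (A.Wcls n s a) = (s0, d0)"
    by (metis prod.exhaust)
  note R = A.rep_Wcls[OF a(1) r]
  have b: "(\<lambda>q. f (Fin s0) PInf n (rep d0 q)) \<in> B.Kseq n s0"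
    using R(1) f_Kim by (simp add: A.Kseq_def B.Kseq_def)
  have "Phi H' eta' del' n (Wpp_map H' eta' f n c) = B.clsCL (n - 1) (s0, bdry_sums H' del' n s0 (\<lambda>q. f (Fin s0) PInf n (rep d0 q)))"
    using Wpp_map_Wcls[OF r] B.Phi_Wcls[OF b] a(2) by simp
  also have "\<dots> = ker_kappa_map H' eta' f (n - 1) (A.clsCL (n - 1) (s0, bdry_sums H del n s0 (rep d0)))"
    using ker_kappa_map_cls[OF A.bdry_sums_carr[OF R(1)]] limH_map_bdry_sums[OF R(1)] by simp
  also have "\<dots> = ker_kappa_map H' eta' f (n - 1) (Phi H eta del n c)"
    using A.Phi_Wcls[OF R(1)] R(2) a(2) by simp
  finally show ?thesis .
qed

end

theorem theorem6p7:
  "\<exists>\<Phi> :: (zinf \<Rightarrow> zinf \<Rightarrow> int \<Rightarrow> ('r::ring_1, 'a) rmod)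
         \<Rightarrow> (zinf \<Rightarrow> zinf \<Rightarrow> zinf \<Rightarrow> zinf \<Rightarrow> int \<Rightarrow> 'a \<Rightarrow> 'a)
         \<Rightarrow> (zinf \<Rightarrow> zinf \<Rightarrow> zinf \<Rightarrow> int \<Rightarrow> 'a \<Rightarrow> 'a)
         \<Rightarrow> int \<Rightarrow> (int \<times> (nat \<Rightarrow> 'a) set) set \<Rightarrow> (int \<times> (int \<Rightarrow> 'a)) set.
     (\<forall>H eta del. right_CE H eta del \<longrightarrow>
        (\<forall>n. is_iso (Wpp H eta n) (ker_kappa H eta (n - 1)) (\<Phi> H eta del n)))
   \<and> (\<forall>H eta del H' eta' del' f.
        right_CE H eta del \<and> right_CE H' eta' del' \<and> right_CE_mor H eta del H' eta' del' f \<longrightarrow>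
        (\<forall>n. \<forall>c\<in>carr (Wpp H eta n).
           \<Phi> H' eta' del' n (Wpp_map H' eta' f n c) = ker_kappa_map H' eta' f (n - 1) (\<Phi> H eta del n c)))"
proof (intro exI[of _ Phi] conjI allI impI ballI)
  fix H :: "zinf \<Rightarrow> zinf \<Rightarrow> int \<Rightarrow> ('r::ring_1, 'a) rmod" and eta del n
  assume "right_CE H eta del"
  then interpret right_CE_system H eta del
    by unfold_locales
  show "is_iso (Wpp H eta n) (ker_kappa H eta (n - 1)) (Phi H eta del n)"
    by (rule Phi_iso)
next
  fix H :: "zinf \<Rightarrow> zinf \<Rightarrow> int \<Rightarrow> ('r::ring_1, 'a) rmod" and eta del H' eta' del' f n c
  assume "right_CE H eta del \<and> right_CE H' eta' del' \<and> right_CE_mor H eta del H' eta' del' f"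
    and c: "c \<in> carr (Wpp H eta n)"
  then interpret right_CE_morphism H eta del H' eta' del' f
    by (simp add: right_CE_morphism_def right_CE_morphism_axioms_def right_CE_system_def)
  show "Phi H' eta' del' n (Wpp_map H' eta' f n c) = ker_kappa_map H' eta' f (n - 1) (Phi H eta del n c)"
    by (rule Phi_natural[OF c])
qed

end
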